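(* Let $\mathbb{C}$ be an abelian category. Then: (i) every object $X$ satisfies: if $\kappa:X\to A$ is the kernel of a split epimorphism which is also a normal epimorphism, then $\kappa$ is a split monomorphism; (ii) every object is proto-complete; (iii) an object is complete if and only if it is (regular) injective; (iv) an object is strong-complete if and only if it is a zero object. More generally, (i), (iii) (with "regular injective", i.e. injective with respect to regular monomorphisms) and (iv) hold whenever $\mathbb{C}$ is a category whose opposite $\mathbb{C}^{\mathrm{op}}$ is semi-abelian.
   Context: A normal monomorphism (epimorphism) is a kernel (cokernel) of some morphism; a protosplit monomorphism is a kernel of a split epimorphism. An object $X$ of a pointed category is proto-complete if every protosplit monomorphism with domain $X$ is a split monomorphism; complete if every normal monomorphism with domain $X$ is a split monomorphism; strong-complete if every protosplit monomorphism with domain $X$ is a split monomorphism with a unique retraction. A category is semi-abelian if it is pointed, Barr-exact, protomodular (split short five lemma holds) and has binary coproducts. *)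

theory Defs
  imports Main
begin

text \<open>A (locally small or not) category presented by its set of objects, its set of
arrows, domain, codomain, identities and composition. cComp C g f is "g after f".\<close>

record ('o, 'a) cat =
  cObj  :: "'o set"
  cArr  :: "'a set"
  cDom  :: "'a \<Rightarrow> 'o"
  cCod  :: "'a \<Rightarrow> 'o"
  cId   :: "'o \<Rightarrow> 'a"
  cComp :: "'a \<Rightarrow> 'a \<Rightarrow> 'a"

definition hom :: "('o, 'a) cat \<Rightarrow> 'o \<Rightarrow> 'o \<Rightarrow> 'a set" where
  "hom C X Y = {f \<in> cArr C. cDom C f = X \<and> cCod C f = Y}"

definition category :: "('o, 'a) cat \<Rightarrow> bool" where
  "category C \<longleftrightarrow>
     (\<forall>f \<in> cArr C. cDom C f \<in> cObj C \<and> cCod C f \<in> cObj C) \<and>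
     (\<forall>X \<in> cObj C. cId C X \<in> hom C X X) \<and>
     (\<forall>f g. f \<in> cArr C \<and> g \<in> cArr C \<and> cCod C f = cDom C g \<longrightarrow>
            cComp C g f \<in> hom C (cDom C f) (cCod C g)) \<and>
     (\<forall>f \<in> cArr C. cComp C f (cId C (cDom C f)) = f \<and> cComp C (cId C (cCod C f)) f = f) \<and>
     (\<forall>f g h. f \<in> cArr C \<and> g \<in> cArr C \<and> h \<in> cArr C \<and>
            cCod C f = cDom C g \<and> cCod C g = cDom C h \<longrightarrow>
            cComp C h (cComp C g f) = cComp C (cComp C h g) f)"

definition op_cat :: "('o, 'a) cat \<Rightarrow> ('o, 'a) cat" where
  "op_cat C = C\<lparr>cDom := cCod C, cCod := cDom C, cComp := (\<lambda>g f. cComp C f g)\<rparr>"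

definition iso :: "('o, 'a) cat \<Rightarrow> 'a \<Rightarrow> bool" where
  "iso C f \<longleftrightarrow> f \<in> cArr C \<and> (\<exists>g \<in> hom C (cCod C f) (cDom C f).
      cComp C g f = cId C (cDom C f) \<and> cComp C f g = cId C (cCod C f))"

definition mono :: "('o, 'a) cat \<Rightarrow> 'a \<Rightarrow> bool" where
  "mono C m \<longleftrightarrow> m \<in> cArr C \<and>
     (\<forall>g h. g \<in> cArr C \<and> h \<in> cArr C \<and> cCod C g = cDom C m \<and> cCod C h = cDom C m \<and>
            cDom C g = cDom C h \<and> cComp C m g = cComp C m h \<longrightarrow> g = h)"

definition epi :: "('o, 'a) cat \<Rightarrow> 'a \<Rightarrow> bool" where
  "epi C e \<longleftrightarrow> mono (op_cat C) e"

definition is_retraction :: "('o, 'a) cat \<Rightarrow> 'a \<Rightarrow> 'a \<Rightarrow> bool" where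
  "is_retraction C r m \<longleftrightarrow> m \<in> cArr C \<and> r \<in> hom C (cCod C m) (cDom C m) \<and>
     cComp C r m = cId C (cDom C m)"

definition split_mono :: "('o, 'a) cat \<Rightarrow> 'a \<Rightarrow> bool" where
  "split_mono C m \<longleftrightarrow> m \<in> cArr C \<and> (\<exists>r. is_retraction C r m)"

definition split_epi :: "('o, 'a) cat \<Rightarrow> 'a \<Rightarrow> bool" where
  "split_epi C p \<longleftrightarrow> p \<in> cArr C \<and>
     (\<exists>s \<in> hom C (cCod C p) (cDom C p). cComp C p s = cId C (cCod C p))"

definition initial :: "('o, 'a) cat \<Rightarrow> 'o \<Rightarrow> bool" where
  "initial C Z \<longleftrightarrow> Z \<in> cObj C \<and> (\<forall>Y \<in> cObj C. \<exists>!f. f \<in> hom C Z Y)"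

definition terminal :: "('o, 'a) cat \<Rightarrow> 'o \<Rightarrow> bool" where
  "terminal C Z \<longleftrightarrow> initial (op_cat C) Z"

definition zero_obj :: "('o, 'a) cat \<Rightarrow> 'o \<Rightarrow> bool" where
  "zero_obj C Z \<longleftrightarrow> initial C Z \<and> terminal C Z"

definition pointed :: "('o, 'a) cat \<Rightarrow> bool" where
  "pointed C \<longleftrightarrow> category C \<and> (\<exists>Z. zero_obj C Z)"

definition zero_arr :: "('o, 'a) cat \<Rightarrow> 'a \<Rightarrow> bool" where
  "zero_arr C f \<longleftrightarrow> f \<in> cArr C \<and> (\<exists>Z g h. zero_obj C Z \<and> g \<in> hom C (cDom C f) Z \<and>
      h \<in> hom C Z (cCod C f) \<and> f = cComp C h g)"

definition is_kernel :: "('o, 'a) cat \<Rightarrow> 'a \<Rightarrow> 'a \<Rightarrow> bool" where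
  "is_kernel C k f \<longleftrightarrow> k \<in> cArr C \<and> f \<in> cArr C \<and> cCod C k = cDom C f \<and>
     zero_arr C (cComp C f k) \<and>
     (\<forall>g \<in> cArr C. cCod C g = cDom C f \<and> zero_arr C (cComp C f g) \<longrightarrow>
        (\<exists>!u. u \<in> hom C (cDom C g) (cDom C k) \<and> cComp C k u = g))"

definition is_cokernel :: "('o, 'a) cat \<Rightarrow> 'a \<Rightarrow> 'a \<Rightarrow> bool" where
  "is_cokernel C q f \<longleftrightarrow> is_kernel (op_cat C) q f"

definition normal_mono :: "('o, 'a) cat \<Rightarrow> 'a \<Rightarrow> bool" where
  "normal_mono C m \<longleftrightarrow> (\<exists>f. is_kernel C m f)"

definition normal_epi :: "('o, 'a) cat \<Rightarrow> 'a \<Rightarrow> bool" where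
  "normal_epi C e \<longleftrightarrow> (\<exists>f. is_cokernel C e f)"

definition protosplit_mono :: "('o, 'a) cat \<Rightarrow> 'a \<Rightarrow> bool" where
  "protosplit_mono C m \<longleftrightarrow> (\<exists>p. split_epi C p \<and> is_kernel C m p)"

definition is_equalizer :: "('o, 'a) cat \<Rightarrow> 'a \<Rightarrow> 'a \<Rightarrow> 'a \<Rightarrow> bool" where
  "is_equalizer C e f g \<longleftrightarrow> e \<in> cArr C \<and> f \<in> cArr C \<and> g \<in> cArr C \<and>
     cDom C f = cDom C g \<and> cCod C f = cCod C g \<and> cCod C e = cDom C f \<and>
     cComp C f e = cComp C g e \<and>
     (\<forall>h \<in> cArr C. cCod C h = cDom C f \<and> cComp C f h = cComp C g h \<longrightarrow>
        (\<exists>!u. u \<in> hom C (cDom C h) (cDom C e) \<and> cComp C e u = h))"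

definition is_coequalizer :: "('o, 'a) cat \<Rightarrow> 'a \<Rightarrow> 'a \<Rightarrow> 'a \<Rightarrow> bool" where
  "is_coequalizer C q f g \<longleftrightarrow> is_equalizer (op_cat C) q f g"

definition regular_mono :: "('o, 'a) cat \<Rightarrow> 'a \<Rightarrow> bool" where
  "regular_mono C m \<longleftrightarrow> (\<exists>f g. is_equalizer C m f g)"

definition regular_epi :: "('o, 'a) cat \<Rightarrow> 'a \<Rightarrow> bool" where
  "regular_epi C e \<longleftrightarrow> (\<exists>f g. is_coequalizer C e f g)"

definition is_product :: "('o, 'a) cat \<Rightarrow> 'o \<Rightarrow> 'a \<Rightarrow> 'a \<Rightarrow> 'o \<Rightarrow> 'o \<Rightarrow> bool" where
  "is_product C P p1 p2 A B \<longleftrightarrow> p1 \<in> hom C P A \<and> p2 \<in> hom C P B \<and>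
     (\<forall>T \<in> cObj C. \<forall>f1 \<in> hom C T A. \<forall>f2 \<in> hom C T B.
        \<exists>!u. u \<in> hom C T P \<and> cComp C p1 u = f1 \<and> cComp C p2 u = f2)"

definition has_binary_products :: "('o, 'a) cat \<Rightarrow> bool" where
  "has_binary_products C \<longleftrightarrow>
     (\<forall>A \<in> cObj C. \<forall>B \<in> cObj C. \<exists>P p1 p2. is_product C P p1 p2 A B)"

definition has_binary_coproducts :: "('o, 'a) cat \<Rightarrow> bool" where
  "has_binary_coproducts C \<longleftrightarrow> has_binary_products (op_cat C)"

definition has_equalizers :: "('o, 'a) cat \<Rightarrow> bool" where
  "has_equalizers C \<longleftrightarrow> (\<forall>f \<in> cArr C. \<forall>g \<in> cArr C.
     cDom C f = cDom C g \<and> cCod C f = cCod C g \<longrightarrow> (\<exists>e. is_equalizer C e f g))"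

definition has_finite_limits :: "('o, 'a) cat \<Rightarrow> bool" where
  "has_finite_limits C \<longleftrightarrow> (\<exists>T. terminal C T) \<and> has_binary_products C \<and> has_equalizers C"

definition is_pullback :: "('o, 'a) cat \<Rightarrow> 'a \<Rightarrow> 'a \<Rightarrow> 'a \<Rightarrow> 'a \<Rightarrow> bool" where
  "is_pullback C p1 p2 f g \<longleftrightarrow> p1 \<in> cArr C \<and> p2 \<in> cArr C \<and> f \<in> cArr C \<and> g \<in> cArr C \<and>
     cDom C p1 = cDom C p2 \<and> cCod C p1 = cDom C f \<and> cCod C p2 = cDom C g \<and>
     cCod C f = cCod C g \<and> cComp C f p1 = cComp C g p2 \<and>
     (\<forall>T \<in> cObj C. \<forall>a \<in> hom C T (cDom C f). \<forall>b \<in> hom C T (cDom C g).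
        cComp C f a = cComp C g b \<longrightarrow>
        (\<exists>!u. u \<in> hom C T (cDom C p1) \<and> cComp C p1 u = a \<and> cComp C p2 u = b))"

definition is_kernel_pair :: "('o, 'a) cat \<Rightarrow> 'a \<Rightarrow> 'a \<Rightarrow> 'a \<Rightarrow> bool" where
  "is_kernel_pair C r1 r2 f \<longleftrightarrow> is_pullback C r1 r2 f f"

definition injective_wrt :: "('o, 'a) cat \<Rightarrow> ('a \<Rightarrow> bool) \<Rightarrow> 'o \<Rightarrow> bool" where
  "injective_wrt C P X \<longleftrightarrow> X \<in> cObj C \<and>
     (\<forall>m f. P m \<and> f \<in> hom C (cDom C m) X \<longrightarrow>
        (\<exists>g \<in> hom C (cCod C m) X. cComp C g m = f))"

definition injective_obj :: "('o, 'a) cat \<Rightarrow> 'o \<Rightarrow> bool" where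
  "injective_obj C X \<longleftrightarrow> injective_wrt C (mono C) X"

definition regular_injective_obj :: "('o, 'a) cat \<Rightarrow> 'o \<Rightarrow> bool" where
  "regular_injective_obj C X \<longleftrightarrow> injective_wrt C (regular_mono C) X"

definition proto_complete_obj :: "('o, 'a) cat \<Rightarrow> 'o \<Rightarrow> bool" where
  "proto_complete_obj C X \<longleftrightarrow> X \<in> cObj C \<and>
     (\<forall>m. protosplit_mono C m \<and> cDom C m = X \<longrightarrow> split_mono C m)"

definition complete_obj :: "('o, 'a) cat \<Rightarrow> 'o \<Rightarrow> bool" where
  "complete_obj C X \<longleftrightarrow> X \<in> cObj C \<and>
     (\<forall>m. normal_mono C m \<and> cDom C m = X \<longrightarrow> split_mono C m)"

definition strong_complete_obj :: "('o, 'a) cat \<Rightarrow> 'o \<Rightarrow> bool" where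
  "strong_complete_obj C X \<longleftrightarrow> X \<in> cObj C \<and>
     (\<forall>m. protosplit_mono C m \<and> cDom C m = X \<longrightarrow> (\<exists>!r. is_retraction C r m))"

definition abelian :: "('o, 'a) cat \<Rightarrow> bool" where
  "abelian C \<longleftrightarrow> pointed C \<and> has_binary_products C \<and> has_binary_coproducts C \<and>
     (\<forall>f \<in> cArr C. \<exists>k. is_kernel C k f) \<and> (\<forall>f \<in> cArr C. \<exists>q. is_cokernel C q f) \<and>
     (\<forall>m. mono C m \<longrightarrow> normal_mono C m) \<and> (\<forall>e. epi C e \<longrightarrow> normal_epi C e)"

definition regular_cat :: "('o, 'a) cat \<Rightarrow> bool" where
  "regular_cat C \<longleftrightarrow> category C \<and> has_finite_limits C \<and>
     (\<forall>f r1 r2. is_kernel_pair C r1 r2 f \<longrightarrow> (\<exists>q. is_coequalizer C q r1 r2)) \<and>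
     (\<forall>e g p1 p2. regular_epi C e \<and> is_pullback C p1 p2 g e \<longrightarrow> regular_epi C p1)"

text \<open>Internal equivalence relation r1, r2 : R \<rightarrow> X (jointly monic, and inducing an
equivalence relation on each hom-set hom T X).\<close>
definition equiv_rel :: "('o, 'a) cat \<Rightarrow> 'a \<Rightarrow> 'a \<Rightarrow> bool" where
  "equiv_rel C r1 r2 \<longleftrightarrow> r1 \<in> cArr C \<and> r2 \<in> cArr C \<and>
     cDom C r1 = cDom C r2 \<and> cCod C r1 = cCod C r2 \<and>
     (\<forall>T \<in> cObj C. \<forall>a \<in> hom C T (cDom C r1). \<forall>b \<in> hom C T (cDom C r1).
        cComp C r1 a = cComp C r1 b \<and> cComp C r2 a = cComp C r2 b \<longrightarrow> a = b) \<and>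
     (\<forall>T \<in> cObj C.
        (\<forall>x \<in> hom C T (cCod C r1). \<exists>a \<in> hom C T (cDom C r1).
            cComp C r1 a = x \<and> cComp C r2 a = x) \<and>
        (\<forall>a \<in> hom C T (cDom C r1). \<exists>b \<in> hom C T (cDom C r1).
            cComp C r1 b = cComp C r2 a \<and> cComp C r2 b = cComp C r1 a) \<and>
        (\<forall>a \<in> hom C T (cDom C r1). \<forall>b \<in> hom C T (cDom C r1).
            cComp C r2 a = cComp C r1 b \<longrightarrow>
            (\<exists>c \<in> hom C T (cDom C r1). cComp C r1 c = cComp C r1 a \<and> cComp C r2 c = cComp C r2 b)))"

definition barr_exact :: "('o, 'a) cat \<Rightarrow> bool" where
  "barr_exact C \<longleftrightarrow> regular_cat C \<and>
     (\<forall>r1 r2. equiv_rel C r1 r2 \<longrightarrow> (\<exists>f. is_kernel_pair C r1 r2 f))"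

definition split_short_five :: "('o, 'a) cat \<Rightarrow> bool" where
  "split_short_five C \<longleftrightarrow>
     (\<forall>p s k p' s' k' u v w.
        p \<in> cArr C \<and> s \<in> hom C (cCod C p) (cDom C p) \<and> cComp C p s = cId C (cCod C p) \<and>
        is_kernel C k p \<and>
        p' \<in> cArr C \<and> s' \<in> hom C (cCod C p') (cDom C p') \<and> cComp C p' s' = cId C (cCod C p') \<and>
        is_kernel C k' p' \<and>
        u \<in> hom C (cDom C k) (cDom C k') \<and> v \<in> hom C (cDom C p) (cDom C p') \<and>
        w \<in> hom C (cCod C p) (cCod C p') \<and>
        cComp C k' u = cComp C v k \<and> cComp C p' v = cComp C w p \<and> cComp C v s = cComp C s' w \<and>
        iso C u \<and> iso C w \<longrightarrow> iso C v)"

definition semi_abelian :: "('o, 'a) cat \<Rightarrow> bool" where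
  "semi_abelian C \<longleftrightarrow> pointed C \<and> barr_exact C \<and> split_short_five C \<and> has_binary_coproducts C"

end

(*
  In an abelian category let m be a kernel of p, s a section of p and q a cokernel of s.
  Then q m has trivial kernel and trivial cokernel, hence is invertible, and (q m)\<inverse> q is a
  retraction of m vanishing on s; this gives (i) and (ii).  For X \<times> X, m = \<langle>0, 1\<rangle> and s the
  diagonal, this retraction differs from the second projection unless 1 = 0 on X, which gives
  (iv).  For (iii), a map f: A \<rightarrow> X along a mono m: A \<rightarrow> B extends once the normal mono
  X \<rightarrow> (B \<times> X)/\<langle>m, f\<rangle> splits: the kernel of the resulting retraction B \<times> X \<rightarrow> X is a
  complement of X, hence isomorphic to B.

  If the opposite category is semi-abelian, everything is dualised.  There the split short five
  lemma says that a subobject containing the kernel and a section of a split epi is everything;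
  hence maps with trivial kernel are monos, regular epis are normal, split epis are cokernels of
  their kernels, and the cokernel of a split normal mono p is split by the kernel of a retraction
  of p.
*)
theory Submission
  imports Defs
begin

lemma op_cat_simps[simp]:
  "cObj (op_cat C) = cObj C" "cArr (op_cat C) = cArr C" "cDom (op_cat C) = cCod C"
  "cCod (op_cat C) = cDom C" "cId (op_cat C) = cId C" "cComp (op_cat C) g f = cComp C f g"
  by (simp_all add: op_cat_def)

lemma op_cat_op_cat[simp]: "op_cat (op_cat C) = C"
  by (simp add: op_cat_def)

lemma hom_op_cat[simp]: "hom (op_cat C) X Y = hom C Y X"
  by (auto simp: hom_def)

lemma category_op_cat[simp]: "category (op_cat C) = category C"
  unfolding category_def hom_def by (auto; metis)

lemma zero_obj_op_cat[simp]: "zero_obj (op_cat C) = zero_obj C"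
  unfolding zero_obj_def terminal_def by auto

lemma zero_arr_op_cat[simp]: "zero_arr (op_cat C) f = zero_arr C f"
  unfolding zero_arr_def by auto

lemma pointed_op_cat[simp]: "pointed (op_cat C) = pointed C"
  unfolding pointed_def by simp

lemma mono_op_cat[simp]: "mono (op_cat C) f = epi C f"
  unfolding epi_def by simp

lemma epi_op_cat[simp]: "epi (op_cat C) f = mono C f"
  unfolding epi_def by simp

lemma is_kernel_op_cat[simp]: "is_kernel (op_cat C) = is_cokernel C"
  by (intro ext) (simp add: is_cokernel_def)

lemma is_cokernel_op_cat[simp]: "is_cokernel (op_cat C) = is_kernel C"
  unfolding is_cokernel_def by simp

lemma normal_mono_op_cat[simp]: "normal_mono (op_cat C) = normal_epi C"
  unfolding normal_mono_def normal_epi_def is_cokernel_def by simp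

lemma normal_epi_op_cat[simp]: "normal_epi (op_cat C) = normal_mono C"
  unfolding normal_mono_def normal_epi_def is_cokernel_def by simp

lemma is_equalizer_op_cat[simp]: "is_equalizer (op_cat C) = is_coequalizer C"
  by (intro ext) (simp add: is_coequalizer_def)

lemma is_coequalizer_op_cat[simp]: "is_coequalizer (op_cat C) = is_equalizer C"
  unfolding is_coequalizer_def by simp

lemma regular_mono_op_cat[simp]: "regular_mono (op_cat C) = regular_epi C"
  by (intro ext) (simp add: regular_mono_def regular_epi_def)

lemma regular_epi_op_cat[simp]: "regular_epi (op_cat C) = regular_mono C"
  unfolding regular_epi_def regular_mono_def by simp

lemma has_binary_products_op_cat[simp]:
  "has_binary_products (op_cat C) = has_binary_coproducts C"
  by (simp add: has_binary_coproducts_def)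

lemma split_mono_op_cat[simp]: "split_mono (op_cat C) = split_epi C"
  by (intro ext) (auto simp: split_mono_def split_epi_def is_retraction_def)

lemma split_epi_op_cat[simp]: "split_epi (op_cat C) = split_mono C"
  by (intro ext) (auto simp: split_mono_def split_epi_def is_retraction_def)

locale pointed_cat =
  fixes C :: "('o, 'a) cat"
  assumes pointed: "pointed C"
begin

lemma category: "category C"
  using pointed by (simp add: pointed_def)

lemma dom_in_obj[simp]: "f \<in> cArr C \<Longrightarrow> cDom C f \<in> cObj C"
  using category unfolding category_def by blast

lemma cod_in_obj[simp]: "f \<in> cArr C \<Longrightarrow> cCod C f \<in> cObj C"
  using category unfolding category_def by blast

lemma id_in_hom: "X \<in> cObj C \<Longrightarrow> cId C X \<in> hom C X X"
  using category unfolding category_def by blast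

lemma id_in_arr[simp]: "X \<in> cObj C \<Longrightarrow> cId C X \<in> cArr C"
  using id_in_hom by (simp add: hom_def)

lemma dom_id[simp]: "X \<in> cObj C \<Longrightarrow> cDom C (cId C X) = X"
  using id_in_hom by (simp add: hom_def)

lemma cod_id[simp]: "X \<in> cObj C \<Longrightarrow> cCod C (cId C X) = X"
  using id_in_hom by (simp add: hom_def)

lemma comp_in_hom_dom_cod:
  "f \<in> cArr C \<Longrightarrow> g \<in> cArr C \<Longrightarrow> cCod C f = cDom C g \<Longrightarrow>
   cComp C g f \<in> hom C (cDom C f) (cCod C g)"
  using category unfolding category_def by blast

lemma comp_in_arr[simp]:
  "f \<in> cArr C \<Longrightarrow> g \<in> cArr C \<Longrightarrow> cCod C f = cDom C g \<Longrightarrow> cComp C g f \<in> cArr C"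
  using comp_in_hom_dom_cod by (simp add: hom_def)

lemma dom_comp[simp]:
  "f \<in> cArr C \<Longrightarrow> g \<in> cArr C \<Longrightarrow> cCod C f = cDom C g \<Longrightarrow> cDom C (cComp C g f) = cDom C f"
  using comp_in_hom_dom_cod by (simp add: hom_def)

lemma cod_comp[simp]:
  "f \<in> cArr C \<Longrightarrow> g \<in> cArr C \<Longrightarrow> cCod C f = cDom C g \<Longrightarrow> cCod C (cComp C g f) = cCod C g"
  using comp_in_hom_dom_cod by (simp add: hom_def)

lemma comp_id_right[simp]: "f \<in> cArr C \<Longrightarrow> cDom C f = X \<Longrightarrow> cComp C f (cId C X) = f"
  using category unfolding category_def by blast

lemma comp_id_left[simp]: "f \<in> cArr C \<Longrightarrow> cCod C f = Y \<Longrightarrow> cComp C (cId C Y) f = f"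
  using category unfolding category_def by blast

lemma comp_assoc[simp]:
  assumes "f \<in> cArr C" "g \<in> cArr C" "h \<in> cArr C" "cCod C f = cDom C g" "cCod C g = cDom C h"
  shows "cComp C h (cComp C g f) = cComp C (cComp C h g) f"
  using category assms unfolding category_def by blast

lemma comp_in_hom: "f \<in> hom C X Y \<Longrightarrow> g \<in> hom C Y Z \<Longrightarrow> cComp C g f \<in> hom C X Z"
  by (simp add: hom_def)

lemma hom_objs: "f \<in> hom C X Y \<Longrightarrow> X \<in> cObj C \<and> Y \<in> cObj C"
  unfolding hom_def using dom_in_obj cod_in_obj by blast

definition zero_object where "zero_object = (SOME Z. zero_obj C Z)"

lemma zero_object: "zero_obj C zero_object"
  using pointed unfolding pointed_def zero_object_def by (metis someI_ex)

lemma zero_obj_in_obj: "zero_obj C Z \<Longrightarrow> Z \<in> cObj C"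
  unfolding zero_obj_def initial_def by blast

lemma zero_obj_unique_from: "zero_obj C Z \<Longrightarrow> Y \<in> cObj C \<Longrightarrow> \<exists>!f. f \<in> hom C Z Y"
  unfolding zero_obj_def initial_def by blast

lemma zero_obj_unique_to: "zero_obj C Z \<Longrightarrow> Y \<in> cObj C \<Longrightarrow> \<exists>!f. f \<in> hom C Y Z"
  unfolding zero_obj_def terminal_def initial_def by simp

definition from_zero where "from_zero Y = (THE f. f \<in> hom C zero_object Y)"
definition to_zero where "to_zero X = (THE f. f \<in> hom C X zero_object)"

lemma from_zero: "Y \<in> cObj C \<Longrightarrow> from_zero Y \<in> hom C zero_object Y"
  unfolding from_zero_def using zero_obj_unique_from[OF zero_object] by (rule theI')

lemma from_zero_unique: "f \<in> hom C zero_object Y \<Longrightarrow> f = from_zero Y"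
  using from_zero zero_obj_unique_from[OF zero_object] hom_objs by blast

lemma to_zero: "X \<in> cObj C \<Longrightarrow> to_zero X \<in> hom C X zero_object"
  unfolding to_zero_def using zero_obj_unique_to[OF zero_object] by (rule theI')

lemma to_zero_unique: "f \<in> hom C X zero_object \<Longrightarrow> f = to_zero X"
  using to_zero zero_obj_unique_to[OF zero_object] hom_objs by blast

definition zero where "zero X Y = cComp C (from_zero Y) (to_zero X)"

lemma zero_in_hom: "X \<in> cObj C \<Longrightarrow> Y \<in> cObj C \<Longrightarrow> zero X Y \<in> hom C X Y"
  unfolding zero_def using from_zero to_zero comp_in_hom by blast

lemma zero_in_arr[simp]: "X \<in> cObj C \<Longrightarrow> Y \<in> cObj C \<Longrightarrow> zero X Y \<in> cArr C"
  and dom_zero[simp]: "X \<in> cObj C \<Longrightarrow> Y \<in> cObj C \<Longrightarrow> cDom C (zero X Y) = X"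
  and cod_zero[simp]: "X \<in> cObj C \<Longrightarrow> Y \<in> cObj C \<Longrightarrow> cCod C (zero X Y) = Y"
  using zero_in_hom by (simp_all add: hom_def)

lemma zero_comp[simp]:
  assumes "g \<in> cArr C" "cCod C g = Y" "W \<in> cObj C"
  shows "cComp C (zero Y W) g = zero (cDom C g) W"
proof -
  have Y: "Y \<in> cObj C" using assms by auto
  have "cComp C (to_zero Y) g = to_zero (cDom C g)"
    using to_zero[OF Y] assms by (intro to_zero_unique) (simp add: hom_def)
  moreover have "cComp C (zero Y W) g = cComp C (from_zero W) (cComp C (to_zero Y) g)"
    unfolding zero_def using from_zero[OF assms(3)] to_zero[OF Y] assms by (simp add: hom_def)
  ultimately show ?thesis
    unfolding zero_def by simp
qed

lemma comp_zero[simp]: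
  assumes "f \<in> cArr C" "cDom C f = Y" "X \<in> cObj C"
  shows "cComp C f (zero X Y) = zero X (cCod C f)"
proof -
  have Y: "Y \<in> cObj C" using assms by auto
  have "cComp C f (from_zero Y) = from_zero (cCod C f)"
    using from_zero[OF Y] assms by (intro from_zero_unique) (simp add: hom_def)
  moreover have "cComp C f (zero X Y) = cComp C (cComp C f (from_zero Y)) (to_zero X)"
    unfolding zero_def using from_zero[OF Y] to_zero[OF assms(3)] assms by (simp add: hom_def)
  ultimately show ?thesis
    unfolding zero_def by simp
qed

text \<open>Since simp normalises composites to left-nested form, an adjacent pair inside a longer
  composite is no longer a subterm; these two rules let it be cancelled anyway.\<close>

lemma comp_zero_left_nested:
  assumes "h \<in> cArr C" "f \<in> cArr C" "k \<in> cArr C" "cCod C k = cDom C f" "cCod C f = cDom C h"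
    "cComp C f k = zero (cDom C k) (cCod C f)"
  shows "cComp C (cComp C h f) k = zero (cDom C k) (cCod C h)"
  using assms by (simp flip: comp_assoc)

lemma comp_id_left_nested:
  assumes "h \<in> cArr C" "e \<in> cArr C" "s \<in> cArr C" "cCod C s = cDom C e" "cCod C e = cDom C h"
    "cComp C e s = cId C (cDom C h)"
  shows "cComp C (cComp C h e) s = h"
  using assms by (simp flip: comp_assoc)

lemma zero_obj_from_eq_zero:
  assumes "zero_obj C Z" "f \<in> hom C Z Y"
  shows "f = zero Z Y"
proof -
  have Y: "Y \<in> cObj C" using hom_objs[OF assms(2)] by blast
  have "zero Z Y \<in> hom C Z Y" using zero_in_hom zero_obj_in_obj[OF assms(1)] Y by blast
  then show ?thesis using zero_obj_unique_from[OF assms(1) Y] assms(2) by blast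
qed

lemma zero_obj_to_eq_zero:
  assumes "zero_obj C Z" "f \<in> hom C X Z"
  shows "f = zero X Z"
proof -
  have X: "X \<in> cObj C" using hom_objs[OF assms(2)] by blast
  have "zero X Z \<in> hom C X Z" using zero_in_hom zero_obj_in_obj[OF assms(1)] X by blast
  then show ?thesis using zero_obj_unique_to[OF assms(1) X] assms(2) by blast
qed

lemma zero_arr_iff: "zero_arr C f \<longleftrightarrow> f \<in> cArr C \<and> f = zero (cDom C f) (cCod C f)"
proof
  assume "zero_arr C f"
  then obtain Z g h where f: "f \<in> cArr C" "zero_obj C Z" "g \<in> hom C (cDom C f) Z"
     "h \<in> hom C Z (cCod C f)" "f = cComp C h g"
    unfolding zero_arr_def by blast
  have "g = zero (cDom C f) Z"
    using zero_obj_to_eq_zero[OF f(2,3)] .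
  then have "cComp C h g = zero (cDom C f) (cCod C f)"
    using f(1,3,4) zero_obj_in_obj[OF f(2)] by (simp add: hom_def)
  then show "f \<in> cArr C \<and> f = zero (cDom C f) (cCod C f)"
    using f(1,5) by simp
next
  assume f: "f \<in> cArr C \<and> f = zero (cDom C f) (cCod C f)"
  have "cDom C f \<in> cObj C" "cCod C f \<in> cObj C"
    using f[THEN conjunct1] by simp_all
  then have "to_zero (cDom C f) \<in> hom C (cDom C f) zero_object"
    "from_zero (cCod C f) \<in> hom C zero_object (cCod C f)"
    using from_zero to_zero by blast+
  then show "zero_arr C f"
    unfolding zero_arr_def using f zero_object unfolding zero_def by blast
qed

lemma zero_arr_zero[simp]: "X \<in> cObj C \<Longrightarrow> Y \<in> cObj C \<Longrightarrow> zero_arr C (zero X Y)"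
  by (simp add: zero_arr_iff)

lemma zero_objI_id_eq_zero:
  assumes X: "X \<in> cObj C" and id: "cId C X = zero X X"
  shows "zero_obj C X"
proof -
  have zero_from: "f = zero X Y" if "f \<in> hom C X Y" for f Y
    using that id comp_id_right[of f X] hom_objs by (auto simp: hom_def)
  have zero_to: "f = zero Y X" if "f \<in> hom C Y X" for f Y
    using that id comp_id_left[of f X] hom_objs by (auto simp: hom_def)
  have "\<exists>!f. f \<in> hom C X Y" "\<exists>!f. f \<in> hom C Y X" if "Y \<in> cObj C" for Y
    using zero_in_hom[OF X that] zero_in_hom[OF that X] zero_from zero_to by blast+
  then show ?thesis
    unfolding zero_obj_def terminal_def initial_def op_cat_simps hom_op_cat using X by blast
qed

lemma monoI:
  assumes "m \<in> cArr C"
    "\<And>g h T. g \<in> hom C T (cDom C m) \<Longrightarrow> h \<in> hom C T (cDom C m) \<Longrightarrow>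
       cComp C m g = cComp C m h \<Longrightarrow> g = h"
  shows "mono C m"
  unfolding mono_def
proof (intro conjI assms(1) allI impI)
  fix g h
  assume "g \<in> cArr C \<and> h \<in> cArr C \<and> cCod C g = cDom C m \<and> cCod C h = cDom C m \<and>
    cDom C g = cDom C h \<and> cComp C m g = cComp C m h"
  then show "g = h" using assms(2)[of g "cDom C g" h] by (simp add: hom_def)
qed

lemma monoD:
  assumes "mono C m" "g \<in> hom C T (cDom C m)" "h \<in> hom C T (cDom C m)"
    "cComp C m g = cComp C m h"
  shows "g = h"
proof -
  have "\<forall>g h. g \<in> cArr C \<and> h \<in> cArr C \<and> cCod C g = cDom C m \<and> cCod C h = cDom C m \<and>
    cDom C g = cDom C h \<and> cComp C m g = cComp C m h \<longrightarrow> g = h"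
    using assms(1) unfolding mono_def by (elim conjE)
  then show ?thesis
    by (rule allE[of _ g], elim allE[of _ h]) (use assms in \<open>auto simp: hom_def\<close>)
qed

lemma epiI:
  assumes "e \<in> cArr C"
    "\<And>g h T. g \<in> hom C (cCod C e) T \<Longrightarrow> h \<in> hom C (cCod C e) T \<Longrightarrow>
       cComp C g e = cComp C h e \<Longrightarrow> g = h"
  shows "epi C e"
  unfolding epi_def mono_def op_cat_simps
proof (intro conjI assms(1) allI impI)
  fix g h
  assume "g \<in> cArr C \<and> h \<in> cArr C \<and> cDom C g = cCod C e \<and> cDom C h = cCod C e \<and>
    cCod C g = cCod C h \<and> cComp C g e = cComp C h e"
  then show "g = h" using assms(2)[of g "cCod C g" h] by (simp add: hom_def)
qed

lemma epiD:
  assumes "epi C e" "g \<in> hom C (cCod C e) T" "h \<in> hom C (cCod C e) T"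
    "cComp C g e = cComp C h e"
  shows "g = h"
proof -
  have "\<forall>g h. g \<in> cArr C \<and> h \<in> cArr C \<and> cDom C g = cCod C e \<and> cDom C h = cCod C e \<and>
    cCod C g = cCod C h \<and> cComp C g e = cComp C h e \<longrightarrow> g = h"
    using assms(1) unfolding epi_def mono_def op_cat_simps by (elim conjE)
  then show ?thesis
    by (rule allE[of _ g], elim allE[of _ h]) (use assms in \<open>auto simp: hom_def\<close>)
qed

lemma mono_in_arr: "mono C m \<Longrightarrow> m \<in> cArr C"
  unfolding mono_def by blast

lemma mono_if_retraction:
  assumes "m \<in> cArr C" "r \<in> hom C (cCod C m) (cDom C m)" "cComp C r m = cId C (cDom C m)"
  shows "mono C m"
proof (rule monoI)
  fix g h T
  assume g: "g \<in> hom C T (cDom C m)" and h: "h \<in> hom C T (cDom C m)"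
    and eq: "cComp C m g = cComp C m h"
  have "cComp C r (cComp C m g) = cComp C r (cComp C m h)" using eq by simp
  then show "g = h" using assms g h by (simp add: hom_def)
qed (rule assms(1))

lemma mono_if_comp_mono:
  assumes "mono C (cComp C g f)" "f \<in> hom C X Y" "g \<in> hom C Y Z"
  shows "mono C f"
proof (rule monoI)
  fix x y T
  assume x: "x \<in> hom C T (cDom C f)" and y: "y \<in> hom C T (cDom C f)"
    and eq: "cComp C f x = cComp C f y"
  have "cComp C g (cComp C f x) = cComp C g (cComp C f y)" using eq by simp
  then have "cComp C (cComp C g f) x = cComp C (cComp C g f) y"
    using assms(2,3) x y by (simp add: hom_def)
  moreover have "x \<in> hom C T (cDom C (cComp C g f))" "y \<in> hom C T (cDom C (cComp C g f))"
    using x y assms(2,3) by (simp_all add: hom_def)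
  ultimately show "x = y" using monoD[OF assms(1)] by blast
qed (use assms(2) in \<open>simp add: hom_def\<close>)

lemma epi_if_section:
  assumes "e \<in> cArr C" "s \<in> hom C (cCod C e) (cDom C e)" "cComp C e s = cId C (cCod C e)"
  shows "epi C e"
proof (rule epiI)
  fix g h T
  assume g: "g \<in> hom C (cCod C e) T" and h: "h \<in> hom C (cCod C e) T"
    and eq: "cComp C g e = cComp C h e"
  have "g = cComp C g (cComp C e s)" using assms g by (simp add: hom_def del: comp_assoc)
  also have "\<dots> = cComp C h (cComp C e s)" using assms(1,2) g h eq by (simp add: hom_def)
  also have "\<dots> = h" using assms h by (simp add: hom_def del: comp_assoc)
  finally show "g = h" .
qed (rule assms(1))

lemma isoE:
  assumes "iso C f"
  obtains g where "g \<in> hom C (cCod C f) (cDom C f)"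
    "cComp C g f = cId C (cDom C f)" "cComp C f g = cId C (cCod C f)"
  using assms unfolding iso_def by blast

lemma iso_in_arr: "iso C f \<Longrightarrow> f \<in> cArr C"
  unfolding iso_def by blast

lemma iso_epi: "iso C f \<Longrightarrow> epi C f"
  by (metis epi_if_section isoE iso_in_arr)

lemma id_iso: "X \<in> cObj C \<Longrightarrow> iso C (cId C X)"
  unfolding iso_def using id_in_hom by (intro conjI bexI[of _ "cId C X"]) (auto simp: hom_def)

lemma zero_arr_comp_iff:
  assumes "f \<in> cArr C" "g \<in> cArr C" "cCod C g = cDom C f"
  shows "zero_arr C (cComp C f g) \<longleftrightarrow> cComp C f g = zero (cDom C g) (cCod C f)"
  using assms by (simp add: zero_arr_iff)

lemma kernelD:
  assumes "is_kernel C k f"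
  shows "k \<in> cArr C" "f \<in> cArr C" "cCod C k = cDom C f"
    "cComp C f k = zero (cDom C k) (cCod C f)"
proof -
  have "k \<in> cArr C \<and> f \<in> cArr C \<and> cCod C k = cDom C f \<and> zero_arr C (cComp C f k)"
    using assms unfolding is_kernel_def by (elim conjE) (intro conjI)
  then show "k \<in> cArr C" "f \<in> cArr C" "cCod C k = cDom C f"
    "cComp C f k = zero (cDom C k) (cCod C f)"
    using zero_arr_comp_iff by blast+
qed

lemma kernel_factor:
  assumes "is_kernel C k f" "g \<in> hom C T (cDom C f)" "cComp C f g = zero T (cCod C f)"
  obtains u where "u \<in> hom C T (cDom C k)" "cComp C k u = g"
proof -
  have univ: "\<forall>g \<in> cArr C. cCod C g = cDom C f \<and> zero_arr C (cComp C f g) \<longrightarrow>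
      (\<exists>!u. u \<in> hom C (cDom C g) (cDom C k) \<and> cComp C k u = g)"
    using assms(1) unfolding is_kernel_def by (elim conjE)
  have g: "g \<in> cArr C" "cDom C g = T" "cCod C g = cDom C f"
    using assms(2) by (auto simp: hom_def)
  have "zero_arr C (cComp C f g)"
    using assms(3) g kernelD[OF assms(1)] zero_arr_comp_iff hom_objs[OF assms(2)] by simp
  then show ?thesis using univ g that by blast
qed

lemma kernel_mono:
  assumes "is_kernel C k f"
  shows "mono C k"
proof (rule monoI)
  note k = kernelD[OF assms]
  show "k \<in> cArr C" using k by blast
  fix g h T
  assume g: "g \<in> hom C T (cDom C k)" and h: "h \<in> hom C T (cDom C k)"
    and eq: "cComp C k g = cComp C k h"
  have univ: "\<forall>g \<in> cArr C. cCod C g = cDom C f \<and> zero_arr C (cComp C f g) \<longrightarrow>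
      (\<exists>!u. u \<in> hom C (cDom C g) (cDom C k) \<and> cComp C k u = g)"
    using assms unfolding is_kernel_def by (elim conjE)
  have kg: "cComp C k g \<in> cArr C" "cCod C (cComp C k g) = cDom C f" "cDom C (cComp C k g) = T"
    using g k by (auto simp: hom_def)
  have "zero_arr C (cComp C f (cComp C k g))"
    using g k hom_objs[OF g] zero_arr_comp_iff[of f "cComp C k g"] by (simp add: hom_def)
  then have "\<exists>!u. u \<in> hom C (cDom C (cComp C k g)) (cDom C k) \<and> cComp C k u = cComp C k g"
    using univ kg(1,2) by blast
  then show "g = h" using g h eq kg(3) by auto
qed

lemma kernelI:
  assumes "k \<in> cArr C" "f \<in> cArr C" "cCod C k = cDom C f"
    "cComp C f k = zero (cDom C k) (cCod C f)" "mono C k"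
    "\<And>g T. g \<in> hom C T (cDom C f) \<Longrightarrow> cComp C f g = zero T (cCod C f) \<Longrightarrow>
       \<exists>u \<in> hom C T (cDom C k). cComp C k u = g"
  shows "is_kernel C k f"
  unfolding is_kernel_def
proof (intro conjI assms(1-3) ballI impI)
  show "zero_arr C (cComp C f k)" using assms zero_arr_comp_iff by simp
  fix g
  assume g: "g \<in> cArr C" "cCod C g = cDom C f \<and> zero_arr C (cComp C f g)"
  then have "cComp C f g = zero (cDom C g) (cCod C f)"
    using assms(2) zero_arr_comp_iff by blast
  then obtain u where u: "u \<in> hom C (cDom C g) (cDom C k)" "cComp C k u = g"
    using assms(6)[of g "cDom C g"] g by (auto simp: hom_def)
  show "\<exists>!u. u \<in> hom C (cDom C g) (cDom C k) \<and> cComp C k u = g"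
  proof (rule ex1I[of _ u])
    fix v assume "v \<in> hom C (cDom C g) (cDom C k) \<and> cComp C k v = g"
    then show "v = u" using u monoD[OF assms(5)] by blast
  qed (use u in blast)
qed

lemma zero_op_cat[simp]:
  assumes "X \<in> cObj C" "Y \<in> cObj C"
  shows "pointed_cat.zero (op_cat C) X Y = zero Y X"
proof -
  interpret op: pointed_cat "op_cat C" by unfold_locales (simp add: pointed)
  have z: "op.zero X Y \<in> hom C Y X"
    using op.zero_in_hom[of X Y] assms by simp
  have "zero_arr (op_cat C) (op.zero X Y)"
    using op.zero_arr_zero[of X Y] assms by simp
  then have "op.zero X Y = zero (cDom C (op.zero X Y)) (cCod C (op.zero X Y))"
    using zero_arr_iff by simp
  moreover have "cDom C (op.zero X Y) = Y" "cCod C (op.zero X Y) = X"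
    using z by (simp_all add: hom_def)
  ultimately show ?thesis by metis
qed

lemma cokernelD:
  assumes "is_cokernel C q f"
  shows "q \<in> cArr C" "f \<in> cArr C" "cDom C q = cCod C f"
    "cComp C q f = zero (cDom C f) (cCod C q)"
proof -
  interpret op: pointed_cat "op_cat C" by unfold_locales (simp add: pointed)
  note k = op.kernelD[of q f]
  show "q \<in> cArr C" "f \<in> cArr C" "cDom C q = cCod C f" using k assms by auto
  then show "cComp C q f = zero (cDom C f) (cCod C q)" using k(4) assms by simp
qed

lemma cokernel_factor:
  assumes "is_cokernel C q f" "g \<in> hom C (cCod C f) T" "cComp C g f = zero (cDom C f) T"
  obtains u where "u \<in> hom C (cCod C q) T" "cComp C u q = g"
proof -
  interpret op: pointed_cat "op_cat C" by unfold_locales (simp add: pointed)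
  have "T \<in> cObj C" "cDom C f \<in> cObj C"
    using assms(2) hom_objs cokernelD(2)[OF assms(1)] by auto
  show ?thesis
  proof (rule op.kernel_factor[of q f g T])
    show "cComp (op_cat C) f g = op.zero T (cCod (op_cat C) f)"
      using assms(3) \<open>T \<in> cObj C\<close> \<open>cDom C f \<in> cObj C\<close> by simp
  qed (use assms that in simp_all)
qed

lemma cokernel_epi: "is_cokernel C q f \<Longrightarrow> epi C q"
proof -
  interpret op: pointed_cat "op_cat C" by unfold_locales (simp add: pointed)
  show "is_cokernel C q f \<Longrightarrow> epi C q" using op.kernel_mono[of q f] by simp
qed

lemma cokernelI:
  assumes "q \<in> cArr C" "f \<in> cArr C" "cDom C q = cCod C f"
    "cComp C q f = zero (cDom C f) (cCod C q)" "epi C q"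
    "\<And>g T. g \<in> hom C (cCod C f) T \<Longrightarrow> cComp C g f = zero (cDom C f) T \<Longrightarrow>
       \<exists>u \<in> hom C (cCod C q) T. cComp C u q = g"
  shows "is_cokernel C q f"
proof -
  interpret op: pointed_cat "op_cat C" by unfold_locales (simp add: pointed)
  have "is_kernel (op_cat C) q f"
  proof (rule op.kernelI)
    fix g T
    assume g: "g \<in> hom (op_cat C) T (cDom (op_cat C) f)"
      and eq: "cComp (op_cat C) f g = op.zero T (cCod (op_cat C) f)"
    have "T \<in> cObj C" "cDom C f \<in> cObj C" using g hom_objs assms(2) by auto
    then show "\<exists>u \<in> hom (op_cat C) T (cDom (op_cat C) q). cComp (op_cat C) q u = g"
      using assms(6)[of g T] g eq by simp
  qed (use assms in simp_all)
  then show ?thesis by simp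
qed

lemma kernel_if_normal_mono_cokernel:
  assumes "normal_mono C m" "is_cokernel C q m"
  shows "is_kernel C m q"
proof -
  obtain g where g: "is_kernel C m g" using assms(1) unfolding normal_mono_def by blast
  note kg = kernelD[OF g] and cq = cokernelD[OF assms(2)]
  obtain u where u: "u \<in> hom C (cCod C q) (cCod C g)" "cComp C u q = g"
    using cokernel_factor[OF assms(2), of g "cCod C g"] kg cq by (auto simp: hom_def)
  show ?thesis
  proof (rule kernelI)
    fix x T
    assume x: "x \<in> hom C T (cDom C q)" "cComp C q x = zero T (cCod C q)"
    have "cComp C g x = cComp C u (cComp C q x)"
      using u x(1) cq by (auto simp: hom_def)
    also have "\<dots> = zero T (cCod C g)" using x u hom_objs[OF x(1)] by (simp add: hom_def)
    finally show "\<exists>v \<in> hom C T (cDom C m). cComp C m v = x"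
      using kernel_factor[OF g, of x T] x kg cq by (metis hom_def mem_Collect_eq)
  qed (use kg cq kernel_mono[OF g] in auto)
qed

lemma cokernel_if_normal_epi_kernel:
  assumes "normal_epi C e" "is_kernel C k e"
  shows "is_cokernel C e k"
proof -
  interpret op: pointed_cat "op_cat C" by unfold_locales (simp add: pointed)
  show ?thesis using op.kernel_if_normal_mono_cokernel[of e k] assms by simp
qed

lemma split_epi_if_cokernel_factors_through_mono:
  assumes \<kappa>: "is_cokernel C \<kappa> p" and t: "mono C t" "t \<in> hom C N (cCod C \<kappa>)"
    and \<tau>: "\<tau> \<in> hom C (cDom C \<kappa>) N" "cComp C t \<tau> = \<kappa>"
  shows "split_epi C t"
proof -
  note c\<kappa> = cokernelD[OF \<kappa>]
  define B K where "B = cDom C p" and "K = cCod C \<kappa>"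
  have \<kappa>h: "\<kappa> \<in> hom C (cDom C \<kappa>) K" and ph: "p \<in> hom C B (cDom C \<kappa>)"
    using c\<kappa> unfolding B_def K_def by (auto simp: hom_def)
  have objs: "B \<in> cObj C" "K \<in> cObj C" "N \<in> cObj C" using \<kappa>h ph t(2) hom_objs by blast+
  have "cComp C t (cComp C \<tau> p) = cComp C (cComp C t \<tau>) p"
    using t(2) \<tau>(1) ph by (simp add: hom_def)
  also have "\<dots> = cComp C t (zero B N)"
    using \<tau>(2) c\<kappa> t(2) objs unfolding B_def K_def by (simp add: hom_def)
  finally have "cComp C \<tau> p = zero B N"
    using monoD[OF t(1)] \<tau> ph t(2) objs zero_in_hom by (simp add: hom_def)
  then obtain h where h: "h \<in> hom C K N" "cComp C h \<kappa> = \<tau>"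
    using cokernel_factor[OF \<kappa>, of \<tau> N] \<tau> ph \<kappa>h unfolding K_def B_def by (auto simp: hom_def)
  have "cComp C (cComp C t h) \<kappa> = cComp C t (cComp C h \<kappa>)"
    using t(2) h(1) \<kappa>h by (simp add: hom_def)
  also have "\<dots> = cComp C (cId C K) \<kappa>"
    using h(2) \<tau>(2) \<kappa>h by (simp add: hom_def)
  finally have "cComp C t h = cId C K"
    using epiD[OF cokernel_epi[OF \<kappa>]] t(2) h \<kappa>h objs id_in_hom by (simp add: hom_def K_def)
  then show ?thesis
    unfolding split_epi_def using t(2) h by (auto simp: hom_def K_def)
qed

lemma kernel_of_comp_mono:
  assumes k: "is_kernel C k s" and m: "mono C m" "m \<in> hom C M (cDom C s)"
    and k': "k' \<in> hom C (cDom C k) M" "cComp C m k' = k"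
  shows "is_kernel C k' (cComp C s m)"
proof (rule kernelI)
  note kk = kernelD[OF k]
  define N where "N = cDom C k"
  have kh: "k \<in> hom C N (cDom C s)" using kk unfolding N_def by (simp add: hom_def)
  have objs: "N \<in> cObj C" "M \<in> cObj C" using kh m(2) hom_objs by blast+
  show "k' \<in> cArr C" "cComp C s m \<in> cArr C" "cCod C k' = cDom C (cComp C s m)"
    using k' m(2) kk by (auto simp: hom_def)
  have "cComp C (cComp C s m) k' = cComp C s (cComp C m k')"
    using k'(1) m(2) kk(1-3) by (simp add: hom_def)
  also have "\<dots> = cComp C s k" by (simp only: k'(2))
  also have "\<dots> = zero (cDom C k') (cCod C (cComp C s m))"
    using k'(1) m(2) kk by (simp add: hom_def)
  finally show "cComp C (cComp C s m) k' = zero (cDom C k') (cCod C (cComp C s m))" .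
  show "mono C k'"
    using mono_if_comp_mono[of m k' N M "cDom C s"] kernel_mono[OF k] k' m(2) N_def by simp
  fix g T
  assume g: "g \<in> hom C T (cDom C (cComp C s m))"
    and sg: "cComp C (cComp C s m) g = zero T (cCod C (cComp C s m))"
  have gh: "g \<in> hom C T M" and T: "T \<in> cObj C" using g m(2) kk hom_objs by (auto simp: hom_def)
  have "cComp C s (cComp C m g) = zero T (cCod C s)" using sg gh m(2) kk by (simp add: hom_def)
  then obtain w where w: "w \<in> hom C T N" "cComp C k w = cComp C m g"
    using kernel_factor[OF k, of "cComp C m g" T] gh m(2) unfolding N_def by (auto simp: hom_def)
  have "cComp C m (cComp C k' w) = cComp C (cComp C m k') w"
    using w(1) k'(1) m(2) by (simp add: hom_def N_def)
  also have "\<dots> = cComp C m g" using w(2) by (simp only: k'(2))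
  finally have "cComp C m (cComp C k' w) = cComp C m g" .
  then have "cComp C k' w = g"
    using monoD[OF m(1), of "cComp C k' w" T g] w(1) k'(1) gh m(2) by (simp add: hom_def N_def)
  moreover have "w \<in> hom C T (cDom C k')" using w(1) k'(1) by (simp add: hom_def N_def)
  ultimately show "\<exists>u \<in> hom C T (cDom C k'). cComp C k' u = g" by blast
qed

definition trivial_kernel :: "'a \<Rightarrow> bool" where
  "trivial_kernel f \<longleftrightarrow> (\<forall>T z. z \<in> hom C T (cDom C f) \<and> cComp C f z = zero T (cCod C f) \<longrightarrow>
     z = zero T (cDom C f))"

definition trivial_cokernel :: "'a \<Rightarrow> bool" where
  "trivial_cokernel f \<longleftrightarrow> (\<forall>T h. h \<in> hom C (cCod C f) T \<and> cComp C h f = zero (cDom C f) T \<longrightarrow>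
     h = zero (cCod C f) T)"

lemma trivial_kernelI:
  "(\<And>T z. z \<in> hom C T (cDom C f) \<Longrightarrow> cComp C f z = zero T (cCod C f) \<Longrightarrow> z = zero T (cDom C f))
   \<Longrightarrow> trivial_kernel f"
  unfolding trivial_kernel_def by blast

lemma trivial_kernelD:
  "trivial_kernel f \<Longrightarrow> z \<in> hom C T (cDom C f) \<Longrightarrow> cComp C f z = zero T (cCod C f) \<Longrightarrow>
   z = zero T (cDom C f)"
  unfolding trivial_kernel_def by blast

lemma trivial_cokernelD:
  "trivial_cokernel f \<Longrightarrow> h \<in> hom C (cCod C f) T \<Longrightarrow> cComp C h f = zero (cDom C f) T \<Longrightarrow>
   h = zero (cCod C f) T"
  unfolding trivial_cokernel_def by blast

lemma trivial_kernel_op_cat: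
  assumes "f \<in> cArr C"
  shows "pointed_cat.trivial_kernel (op_cat C) f \<longleftrightarrow> trivial_cokernel f"
proof -
  interpret op: pointed_cat "op_cat C" by unfold_locales (simp add: pointed)
  have "(z \<in> hom C (cCod C f) T \<and> cComp C z f = op.zero T (cDom C f) \<longrightarrow> z = op.zero T (cCod C f))
    \<longleftrightarrow> (z \<in> hom C (cCod C f) T \<and> cComp C z f = zero (cDom C f) T \<longrightarrow> z = zero (cCod C f) T)"
    for z T
  proof (cases "z \<in> hom C (cCod C f) T")
    case True
    then have "T \<in> cObj C" using hom_objs by blast
    then show ?thesis using assms by simp
  qed simp
  then show ?thesis
    unfolding op.trivial_kernel_def trivial_cokernel_def by simp
qed

lemma trivial_kernel_comp_kernel:
  assumes m: "is_kernel C m p" and s: "is_kernel C s q"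
    and sec: "s \<in> hom C (cCod C p) (cDom C p)" "cComp C p s = cId C (cCod C p)"
  shows "trivial_kernel (cComp C q m)"
proof (rule trivial_kernelI)
  note km = kernelD[OF m] and ks = kernelD[OF s]
  define A B K where "A = cDom C p" and "B = cCod C p" and "K = cDom C m"
  have mh: "m \<in> hom C K A" and ph: "p \<in> hom C A B" and sh: "s \<in> hom C B A"
    and qh: "q \<in> hom C A (cCod C q)"
    using km ks sec unfolding A_def B_def K_def hom_def by auto
  have objs: "A \<in> cObj C" "B \<in> cObj C" "K \<in> cObj C"
    using mh ph hom_objs by blast+
  fix T z
  assume z: "z \<in> hom C T (cDom C (cComp C q m))"
    and qmz: "cComp C (cComp C q m) z = zero T (cCod C (cComp C q m))"
  have zh: "z \<in> hom C T K" and T: "T \<in> cObj C"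
    using z mh qh hom_objs by (auto simp: hom_def)
  have "cComp C q (cComp C m z) = zero T (cCod C q)"
    using qmz zh mh qh by (simp add: hom_def)
  then obtain w where wh: "w \<in> hom C T B" and sw: "cComp C s w = cComp C m z"
    using kernel_factor[OF s, of "cComp C m z" T] zh mh qh sh by (auto simp: hom_def)
  have "w = cComp C (cComp C p s) w"
    using wh sh sec(2) by (simp add: hom_def B_def)
  also have "\<dots> = cComp C (cComp C p m) z"
    using sw wh zh sh mh ph by (simp add: hom_def flip: comp_assoc)
  also have "\<dots> = zero T B"
    using km zh mh ph objs by (simp add: hom_def)
  finally have "cComp C m z = cComp C m (zero T K)"
    using sw sh mh T objs by (simp add: hom_def)
  then show "z = zero T (cDom C (cComp C q m))"
    using monoD[OF kernel_mono[OF m] zh[unfolded K_def]] zero_in_hom T objs mh qh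
    by (simp add: hom_def K_def)
qed

lemma trivial_cokernel_comp_cokernel:
  assumes "is_cokernel C p m" "is_cokernel C q s"
    "s \<in> hom C (cCod C p) (cDom C p)" "cComp C p s = cId C (cCod C p)"
  shows "trivial_cokernel (cComp C q m)"
proof -
  interpret op: pointed_cat "op_cat C" by unfold_locales (simp add: pointed)
  have "op.trivial_kernel (cComp (op_cat C) m q)"
    by (rule op.trivial_kernel_comp_kernel[of q s p m])
      (use assms cokernelD[OF assms(1)] cokernelD[OF assms(2)] in \<open>simp_all add: hom_def\<close>)
  then show ?thesis
    using trivial_kernel_op_cat cokernelD[OF assms(1)] cokernelD[OF assms(2)] assms(3)
    by (simp add: hom_def)
qed

definition tuple where
  "tuple p1 p2 f g =
     (THE u. u \<in> hom C (cDom C f) (cDom C p1) \<and> cComp C p1 u = f \<and> cComp C p2 u = g)"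

lemma productD: "is_product C P p1 p2 A B \<Longrightarrow> p1 \<in> hom C P A \<and> p2 \<in> hom C P B"
  unfolding is_product_def by (elim conjE) (intro conjI)

lemma product_factor:
  assumes "is_product C P p1 p2 A B" "f1 \<in> hom C T A" "f2 \<in> hom C T B"
  shows "\<exists>!u. u \<in> hom C T P \<and> cComp C p1 u = f1 \<and> cComp C p2 u = f2"
proof -
  have "\<forall>T \<in> cObj C. \<forall>f1 \<in> hom C T A. \<forall>f2 \<in> hom C T B.
      \<exists>!u. u \<in> hom C T P \<and> cComp C p1 u = f1 \<and> cComp C p2 u = f2"
    using assms(1) unfolding is_product_def by (elim conjE)
  then show ?thesis using hom_objs[OF assms(2)] assms(2,3) by blast
qed

lemma tuple:
  assumes "is_product C P p1 p2 A B" "f \<in> hom C T A" "g \<in> hom C T B"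
  shows "tuple p1 p2 f g \<in> hom C T P" "cComp C p1 (tuple p1 p2 f g) = f"
    "cComp C p2 (tuple p1 p2 f g) = g"
proof -
  have dom: "cDom C f = T" "cDom C p1 = P"
    using assms productD[OF assms(1)] by (auto simp: hom_def)
  have "tuple p1 p2 f g \<in> hom C T P \<and> cComp C p1 (tuple p1 p2 f g) = f \<and>
      cComp C p2 (tuple p1 p2 f g) = g"
    unfolding tuple_def dom using product_factor[OF assms] by (rule theI')
  then show "tuple p1 p2 f g \<in> hom C T P" "cComp C p1 (tuple p1 p2 f g) = f"
    "cComp C p2 (tuple p1 p2 f g) = g"
    by auto
qed

lemma product_eqI:
  assumes "is_product C P p1 p2 A B" "u \<in> hom C T P" "v \<in> hom C T P"
    "cComp C p1 u = cComp C p1 v" "cComp C p2 u = cComp C p2 v"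
  shows "u = v"
proof -
  have "cComp C p1 u \<in> hom C T A" "cComp C p2 u \<in> hom C T B"
    using productD[OF assms(1)] assms(2) comp_in_hom by blast+
  from product_factor[OF assms(1) this] show ?thesis
    using assms(2-5) by (auto elim!: ex1E)
qed

lemma kernel_of_product_projection:
  assumes P: "is_product C P p1 p2 A B"
  shows "is_kernel C (tuple p1 p2 (zero B A) (cId C B)) p1"
proof -
  have p: "p1 \<in> hom C P A" "p2 \<in> hom C P B" using productD[OF P] by auto
  have AB: "A \<in> cObj C" "B \<in> cObj C" using p hom_objs by blast+
  define k where "k = tuple p1 p2 (zero B A) (cId C B)"
  have k: "k \<in> hom C B P" "cComp C p1 k = zero B A" "cComp C p2 k = cId C B"
    unfolding k_def using tuple[OF P, of "zero B A" B "cId C B"] zero_in_hom id_in_hom AB by auto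
  have "is_kernel C k p1"
  proof (rule kernelI)
    show "mono C k" using mono_if_retraction[of k p2] k p by (auto simp: hom_def)
    fix g T
    assume g: "g \<in> hom C T (cDom C p1)" "cComp C p1 g = zero T (cCod C p1)"
    have T: "T \<in> cObj C" using g hom_objs by blast
    have g2: "cComp C p2 g \<in> hom C T B" using g p comp_in_hom by (auto simp: hom_def)
    have "cComp C k (cComp C p2 g) = g"
    proof (rule product_eqI[OF P])
      show "cComp C k (cComp C p2 g) \<in> hom C T P" using k g2 comp_in_hom by blast
      show "g \<in> hom C T P" using g p by (simp add: hom_def)
      show "cComp C p1 (cComp C k (cComp C p2 g)) = cComp C p1 g"
        using k g2 g p T AB by (simp add: hom_def)
      show "cComp C p2 (cComp C k (cComp C p2 g)) = cComp C p2 g"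
        using k g2 g p T by (simp add: hom_def)
    qed
    then show "\<exists>u \<in> hom C T (cDom C k). cComp C k u = g" using g2 k by (auto simp: hom_def)
  qed (use k p in \<open>auto simp: hom_def\<close>)
  then show ?thesis unfolding k_def .
qed

lemma trivial_kernel_comp_injection:
  assumes P: "is_product C P pB pX B X" and m: "mono C m" "m \<in> hom C A B"
    and f: "f \<in> hom C A X" and q: "is_kernel C (tuple pB pX m f) q"
  shows "trivial_kernel (cComp C q (tuple pB pX (zero X B) (cId C X)))"
proof (rule trivial_kernelI)
  have p: "pB \<in> hom C P B" "pX \<in> hom C P X" using productD[OF P] by auto
  have objs: "A \<in> cObj C" "B \<in> cObj C" "X \<in> cObj C" using m(2) f hom_objs by blast+
  define n i where "n = tuple pB pX m f" and "i = tuple pB pX (zero X B) (cId C X)"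
  have n: "n \<in> hom C A P" "cComp C pB n = m" "cComp C pX n = f"
    unfolding n_def using tuple[OF P m(2) f] by auto
  have i: "i \<in> hom C X P" "cComp C pB i = zero X B" "cComp C pX i = cId C X"
    unfolding i_def using tuple[OF P, of "zero X B" X "cId C X"] zero_in_hom id_in_hom objs by auto
  note kq = kernelD[OF q[folded n_def]]
  fix T z
  assume z: "z \<in> hom C T (cDom C (cComp C q i))"
    and qiz: "cComp C (cComp C q i) z = zero T (cCod C (cComp C q i))"
  have zh: "z \<in> hom C T X" and T: "T \<in> cObj C"
    using z i kq n hom_objs by (auto simp: hom_def)
  have "cComp C q (cComp C i z) = zero T (cCod C q)"
    using qiz zh i kq n by (simp add: hom_def)
  then obtain a where a: "a \<in> hom C T A" "cComp C n a = cComp C i z"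
    using kernel_factor[OF q[folded n_def], of "cComp C i z" T] zh i n kq by (auto simp: hom_def)
  have "cComp C m a = cComp C pB (cComp C n a)" using n a(1) p by (simp add: hom_def)
  also have "\<dots> = zero T B" using a(2) i zh p objs by (simp add: hom_def)
  finally have "cComp C m a = cComp C m (zero T A)" using m(2) T objs by (simp add: hom_def)
  then have a0: "a = zero T A" using monoD[OF m(1)] a(1) m(2) zero_in_hom T objs by (simp add: hom_def)
  have "z = cComp C pX (cComp C i z)" using i zh p by (simp add: hom_def)
  also have "\<dots> = cComp C f a" using a(2)[symmetric] n p a(1) by (simp add: hom_def)
  finally show "z = zero T (cDom C (cComp C q i))"
    using a0 f T objs i kq n by (simp add: hom_def)
qed

lemma diagonal_is_kernel:
  assumes prods: "has_binary_products C" and normal: "\<forall>m. mono C m \<longrightarrow> normal_mono C m"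
    and W: "W \<in> cObj C"
  obtains P p1 p2 c where "is_product C P p1 p2 W W" "is_kernel C (tuple p1 p2 (cId C W) (cId C W)) c"
proof -
  obtain P p1 p2 where P: "is_product C P p1 p2 W W"
    using prods W unfolding has_binary_products_def by blast
  have p: "p1 \<in> hom C P W" "p2 \<in> hom C P W" using productD[OF P] by auto
  have "tuple p1 p2 (cId C W) (cId C W) \<in> hom C W P" "cComp C p1 (tuple p1 p2 (cId C W) (cId C W)) = cId C W"
    using tuple[OF P] id_in_hom[OF W] by auto
  then have "mono C (tuple p1 p2 (cId C W) (cId C W))"
    using mono_if_retraction p by (auto simp: hom_def)
  then show ?thesis using that P normal unfolding normal_mono_def by blast
qed

text \<open>Without an additive structure, trivial cokernels force epimorphisms through the diagonal
  \<open>W \<rightarrow> W \<times> W\<close>: it is the kernel of some c, and \<open>\<langle>g1, g2\<rangle>\<close> lies in that kernel as soon as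
  g1 and g2 agree on t.\<close>

lemma epi_if_trivial_cokernel:
  assumes prods: "has_binary_products C" and normal: "\<forall>m. mono C m \<longrightarrow> normal_mono C m"
    and t: "t \<in> cArr C" "trivial_cokernel t"
  shows "epi C t"
proof (rule epiI[OF t(1)])
  fix g1 g2 W
  assume g1: "g1 \<in> hom C (cCod C t) W" and g2: "g2 \<in> hom C (cCod C t) W"
    and eq: "cComp C g1 t = cComp C g2 t"
  have W: "W \<in> cObj C" and T: "cDom C t \<in> cObj C" using g1 hom_objs t by auto
  obtain P p1 p2 c where P: "is_product C P p1 p2 W W"
    and c: "is_kernel C (tuple p1 p2 (cId C W) (cId C W)) c"
    using diagonal_is_kernel[OF prods normal W] by blast
  define D u where "D = tuple p1 p2 (cId C W) (cId C W)" and "u = tuple p1 p2 g1 g2"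
  have p: "p1 \<in> hom C P W" "p2 \<in> hom C P W" using productD[OF P] by auto
  have D: "D \<in> hom C W P" "cComp C p1 D = cId C W" "cComp C p2 D = cId C W"
    unfolding D_def using tuple[OF P] id_in_hom[OF W] by auto
  have u: "u \<in> hom C (cCod C t) P" "cComp C p1 u = g1" "cComp C p2 u = g2"
    unfolding u_def using tuple[OF P g1 g2] by auto
  note kc = kernelD[OF c[folded D_def]]
  have ut: "cComp C u t = cComp C D (cComp C g1 t)"
    by (rule product_eqI[OF P]) (use u D g1 g2 t p eq in \<open>auto simp: hom_def\<close>)
  have "cComp C (cComp C c u) t = cComp C c (cComp C u t)"
    using u kc D t by (simp add: hom_def)
  also have "\<dots> = zero (cDom C t) (cCod C c)"
    unfolding ut using kc D g1 t T by (simp add: hom_def)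
  finally have "cComp C c u = zero (cCod C t) (cCod C c)"
    using trivial_cokernelD[OF t(2), of "cComp C c u" "cCod C c"] u kc D by (simp add: hom_def)
  then obtain w where w: "w \<in> hom C (cCod C t) W" "cComp C D w = u"
    using kernel_factor[OF c[folded D_def], of u "cCod C t"] u kc D by (auto simp: hom_def)
  have "g1 = w" "g2 = w"
    using u(2,3) w D p by (auto simp: hom_def)
  then show "g1 = g2" by simp
qed

lemma mono_if_trivial_kernel:
  assumes "has_binary_coproducts C" "\<forall>e. epi C e \<longrightarrow> normal_epi C e"
    "t \<in> cArr C" "trivial_kernel t"
  shows "mono C t"
proof -
  interpret op: pointed_cat "op_cat C" by unfold_locales (simp add: pointed)
  have "op.trivial_cokernel t"
    using assms op.trivial_kernel_op_cat[of t] by simp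
  then show ?thesis
    using op.epi_if_trivial_cokernel[of t] assms by simp
qed

lemma iso_if_normal_mono_epi:
  assumes "normal_mono C m" "epi C m"
  shows "iso C m"
proof -
  obtain g where g: "is_kernel C m g" using assms(1) unfolding normal_mono_def by blast
  note kg = kernelD[OF g]
  have "g = zero (cCod C m) (cCod C g)"
    by (rule epiD[OF assms(2)]) (use kg zero_in_hom in \<open>simp_all add: hom_def\<close>)
  then have "cComp C g (cId C (cCod C m)) = zero (cCod C m) (cCod C g)"
    using kg by simp
  then obtain u where u: "u \<in> hom C (cCod C m) (cDom C m)" "cComp C m u = cId C (cCod C m)"
    using kernel_factor[OF g, of "cId C (cCod C m)" "cCod C m"] kg by (auto simp: hom_def)
  have "cComp C m (cComp C u m) = cComp C m (cId C (cDom C m))"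
    using u kg by (simp add: hom_def)
  then have "cComp C u m = cId C (cDom C m)"
    using monoD[OF kernel_mono[OF g]] u kg by (simp add: hom_def)
  then show ?thesis unfolding iso_def using u kg by blast
qed

lemma equalizerD:
  assumes "is_equalizer C e f g"
  shows "e \<in> cArr C" "f \<in> cArr C" "g \<in> cArr C" "cDom C f = cDom C g" "cCod C f = cCod C g"
    "cCod C e = cDom C f" "cComp C f e = cComp C g e"
  using assms unfolding is_equalizer_def by blast+

lemma equalizer_factor:
  assumes "is_equalizer C e f g" "h \<in> hom C T (cDom C f)" "cComp C f h = cComp C g h"
  obtains u where "u \<in> hom C T (cDom C e)" "cComp C e u = h"
proof -
  have "\<forall>h \<in> cArr C. cCod C h = cDom C f \<and> cComp C f h = cComp C g h \<longrightarrow>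
      (\<exists>!u. u \<in> hom C (cDom C h) (cDom C e) \<and> cComp C e u = h)"
    using assms(1) unfolding is_equalizer_def by (elim conjE)
  moreover have "h \<in> cArr C" "cCod C h = cDom C f" "cDom C h = T"
    using assms(2) by (auto simp: hom_def)
  ultimately show ?thesis using assms(3) that by blast
qed

lemma equalizer_mono:
  assumes "is_equalizer C e f g"
  shows "mono C e"
proof (rule monoI)
  note eq = equalizerD[OF assms]
  show "e \<in> cArr C" using eq by blast
  fix x y T
  assume x: "x \<in> hom C T (cDom C e)" and y: "y \<in> hom C T (cDom C e)"
    and xy: "cComp C e x = cComp C e y"
  have "\<forall>h \<in> cArr C. cCod C h = cDom C f \<and> cComp C f h = cComp C g h \<longrightarrow>
      (\<exists>!u. u \<in> hom C (cDom C h) (cDom C e) \<and> cComp C e u = h)"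
    using assms unfolding is_equalizer_def by (elim conjE)
  moreover have "cComp C e x \<in> cArr C" "cCod C (cComp C e x) = cDom C f"
    "cComp C f (cComp C e x) = cComp C g (cComp C e x)"
    using x eq by (auto simp: hom_def)
  ultimately have "\<exists>!u. u \<in> hom C (cDom C (cComp C e x)) (cDom C e) \<and> cComp C e u = cComp C e x"
    by blast
  then show "x = y" using x y xy eq by (auto simp: hom_def)
qed

lemma kernel_is_equalizer:
  assumes "is_kernel C m g"
  shows "is_equalizer C m g (zero (cDom C g) (cCod C g))"
  unfolding is_equalizer_def
proof (intro conjI ballI impI)
  note kg = kernelD[OF assms]
  show "m \<in> cArr C" "g \<in> cArr C" "zero (cDom C g) (cCod C g) \<in> cArr C"
    "cDom C g = cDom C (zero (cDom C g) (cCod C g))"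
    "cCod C g = cCod C (zero (cDom C g) (cCod C g))"
    "cCod C m = cDom C g" "cComp C g m = cComp C (zero (cDom C g) (cCod C g)) m"
    using kg by auto
  fix h
  assume h: "h \<in> cArr C" "cCod C h = cDom C g \<and> cComp C g h = cComp C (zero (cDom C g) (cCod C g)) h"
  then have "cComp C g h = zero (cDom C h) (cCod C g)" using kg by simp
  then obtain u where u: "u \<in> hom C (cDom C h) (cDom C m)" "cComp C m u = h"
    using kernel_factor[OF assms, of h "cDom C h"] h by (auto simp: hom_def)
  show "\<exists>!u. u \<in> hom C (cDom C h) (cDom C m) \<and> cComp C m u = h"
  proof (rule ex1I[of _ u])
    fix v assume "v \<in> hom C (cDom C h) (cDom C m) \<and> cComp C m v = h"
    then show "v = u" using u monoD[OF kernel_mono[OF assms]] by blast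
  qed (use u in blast)
qed

lemma mono_if_regular_mono: "regular_mono C m \<Longrightarrow> mono C m"
  unfolding regular_mono_def using equalizer_mono by blast

lemma regular_mono_if_normal_mono: "normal_mono C m \<Longrightarrow> regular_mono C m"
  unfolding normal_mono_def regular_mono_def using kernel_is_equalizer by blast

lemma complete_if_regular_injective:
  assumes "regular_injective_obj C X"
  shows "complete_obj C X"
  unfolding complete_obj_def
proof (intro conjI allI impI)
  have X: "X \<in> cObj C" and ext: "\<And>m f. regular_mono C m \<Longrightarrow> f \<in> hom C (cDom C m) X \<Longrightarrow>
      \<exists>g \<in> hom C (cCod C m) X. cComp C g m = f"
    using assms unfolding regular_injective_obj_def injective_wrt_def by auto
  show "X \<in> cObj C" by (rule X)
  fix m
  assume m: "normal_mono C m \<and> cDom C m = X"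
  then have reg: "regular_mono C m" using regular_mono_if_normal_mono by blast
  then have "m \<in> cArr C" using mono_if_regular_mono mono_in_arr by blast
  moreover obtain r where "r \<in> hom C (cCod C m) X" "cComp C r m = cId C X"
    using ext[OF reg, of "cId C X"] m id_in_hom X by auto
  ultimately show "split_mono C m"
    unfolding split_mono_def is_retraction_def using m by auto
qed

lemma regular_injective_if_injective: "injective_obj C X \<Longrightarrow> regular_injective_obj C X"
  unfolding injective_obj_def regular_injective_obj_def injective_wrt_def
  using mono_if_regular_mono by blast

lemma strong_complete_if_zero_obj:
  assumes "zero_obj C X"
  shows "strong_complete_obj C X"
  unfolding strong_complete_obj_def
proof (intro conjI allI impI)
  show X: "X \<in> cObj C" using zero_obj_in_obj[OF assms] .
  fix m
  assume m: "protosplit_mono C m \<and> cDom C m = X"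
  then have ma: "m \<in> cArr C" unfolding protosplit_mono_def using kernelD by blast
  let ?r = "zero (cCod C m) X"
  have "cId C X = zero X X" using zero_obj_from_eq_zero[OF assms id_in_hom[OF X]] .
  then have "is_retraction C ?r m"
    unfolding is_retraction_def using zero_in_hom X ma m by auto
  moreover have "r = ?r" if "is_retraction C r m" for r
    using that zero_obj_to_eq_zero[OF assms] m unfolding is_retraction_def by auto
  ultimately show "\<exists>!r. is_retraction C r m" by blast
qed

lemma coequalizerD:
  assumes "is_coequalizer C q f g"
  shows "q \<in> cArr C" "f \<in> cArr C" "cCod C f = cCod C g" "cDom C q = cCod C f"
    "cComp C q f = cComp C q g"
  using assms unfolding is_coequalizer_def is_equalizer_def by auto

lemma coequalizer_factor:
  assumes "is_coequalizer C q f g" "h \<in> hom C (cCod C f) T" "cComp C h f = cComp C h g"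
  obtains u where "u \<in> hom C (cCod C q) T" "cComp C u q = h"
proof -
  interpret op: pointed_cat "op_cat C" by unfold_locales (simp add: pointed)
  show ?thesis by (rule op.equalizer_factor[of q f g h T]) (use assms that in simp_all)
qed

lemma coequalizer_epi: "is_coequalizer C q f g \<Longrightarrow> epi C q"
proof -
  interpret op: pointed_cat "op_cat C" by unfold_locales (simp add: pointed)
  show "is_coequalizer C q f g \<Longrightarrow> epi C q" using op.equalizer_mono[of q f g] by simp
qed

lemma pullbackD:
  assumes "is_pullback C p1 p2 f g"
  shows "p1 \<in> cArr C" "p2 \<in> cArr C" "f \<in> cArr C" "g \<in> cArr C"
    "cDom C p1 = cDom C p2" "cCod C p1 = cDom C f" "cCod C p2 = cDom C g"
    "cCod C f = cCod C g" "cComp C f p1 = cComp C g p2"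
  using assms unfolding is_pullback_def by blast+

lemma pullback_factor:
  assumes "is_pullback C p1 p2 f g" "a \<in> hom C T (cDom C f)" "b \<in> hom C T (cDom C g)"
    "cComp C f a = cComp C g b"
  shows "\<exists>!u. u \<in> hom C T (cDom C p1) \<and> cComp C p1 u = a \<and> cComp C p2 u = b"
proof -
  have "\<forall>T \<in> cObj C. \<forall>a \<in> hom C T (cDom C f). \<forall>b \<in> hom C T (cDom C g).
      cComp C f a = cComp C g b \<longrightarrow>
      (\<exists>!u. u \<in> hom C T (cDom C p1) \<and> cComp C p1 u = a \<and> cComp C p2 u = b)"
    using assms(1) unfolding is_pullback_def by (elim conjE)
  then show ?thesis using hom_objs[OF assms(2)] assms(2-4) by blast
qed

lemma pullback_eqI:
  assumes "is_pullback C p1 p2 f g" "u \<in> hom C T (cDom C p1)" "v \<in> hom C T (cDom C p1)"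
    "cComp C p1 u = cComp C p1 v" "cComp C p2 u = cComp C p2 v"
  shows "u = v"
proof -
  note pb = pullbackD[OF assms(1)]
  have "cComp C p1 u \<in> hom C T (cDom C f)" "cComp C p2 u \<in> hom C T (cDom C g)"
    "cComp C f (cComp C p1 u) = cComp C g (cComp C p2 u)"
    using assms(2) pb by (auto simp: hom_def)
  from pullback_factor[OF assms(1) this] show ?thesis
    using assms(2-5) by (auto elim!: ex1E)
qed

lemma pullback_of_mono:
  assumes pb: "is_pullback C p1 p2 f g" and g: "mono C g"
  shows "mono C p1"
proof (rule monoI)
  note d = pullbackD[OF pb]
  show "p1 \<in> cArr C" using d by blast
  fix x y T
  assume x: "x \<in> hom C T (cDom C p1)" and y: "y \<in> hom C T (cDom C p1)"
    and xy: "cComp C p1 x = cComp C p1 y"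
  have "cComp C g (cComp C p2 x) = cComp C f (cComp C p1 x)"
    "cComp C g (cComp C p2 y) = cComp C f (cComp C p1 y)"
    using x y d by (simp_all add: hom_def)
  then have "cComp C g (cComp C p2 x) = cComp C g (cComp C p2 y)"
    using xy by simp
  then have "cComp C p2 x = cComp C p2 y"
    using monoD[OF g] x y d by (simp add: hom_def)
  then show "x = y" using pullback_eqI[OF pb x y xy] by blast
qed

lemma pullback_of_product_equalizer:
  assumes P: "is_product C P q1 q2 X Y" and f: "f \<in> hom C X Z" and g: "g \<in> hom C Y Z"
    and e: "is_equalizer C e (cComp C f q1) (cComp C g q2)"
  shows "is_pullback C (cComp C q1 e) (cComp C q2 e) f g"
  unfolding is_pullback_def
proof (intro conjI ballI impI)
  have q: "q1 \<in> hom C P X" "q2 \<in> hom C P Y" using productD[OF P] by auto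
  note ed = equalizerD[OF e]
  define E where "E = cDom C e"
  have eh: "e \<in> hom C E P" using ed q f g unfolding E_def by (simp add: hom_def)
  show "cComp C f (cComp C q1 e) = cComp C g (cComp C q2 e)"
    using ed eh f g q by (simp add: hom_def)
  show "cComp C q1 e \<in> cArr C" "cComp C q2 e \<in> cArr C" "f \<in> cArr C" "g \<in> cArr C"
    "cDom C (cComp C q1 e) = cDom C (cComp C q2 e)" "cCod C (cComp C q1 e) = cDom C f"
    "cCod C (cComp C q2 e) = cDom C g" "cCod C f = cCod C g"
    using eh q f g by (auto simp: hom_def)
  fix T a b
  assume a: "a \<in> hom C T (cDom C f)" and b: "b \<in> hom C T (cDom C g)"
    and ab: "cComp C f a = cComp C g b"
  have ah: "a \<in> hom C T X" and bh: "b \<in> hom C T Y" using a b f g by (auto simp: hom_def)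
  note t = tuple[OF P ah bh]
  have "cComp C (cComp C f q1) (tuple q1 q2 a b) = cComp C (cComp C g q2) (tuple q1 q2 a b)"
    using t f g q ab by (simp add: hom_def flip: comp_assoc)
  then obtain u where u: "u \<in> hom C T E" "cComp C e u = tuple q1 q2 a b"
    using equalizer_factor[OF e, of "tuple q1 q2 a b" T] t q f unfolding E_def
    by (auto simp: hom_def)
  show "\<exists>!u. u \<in> hom C T (cDom C (cComp C q1 e)) \<and> cComp C (cComp C q1 e) u = a \<and>
      cComp C (cComp C q2 e) u = b"
  proof (rule ex1I[of _ u])
    fix v
    assume v: "v \<in> hom C T (cDom C (cComp C q1 e)) \<and> cComp C (cComp C q1 e) v = a \<and>
      cComp C (cComp C q2 e) v = b"
    then have vh: "v \<in> hom C T E" using eh q by (simp add: hom_def)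
    have "cComp C e v = cComp C e u"
      by (rule product_eqI[OF P]) (use v vh u eh q t in \<open>auto simp: hom_def\<close>)
    then show "v = u" using monoD[OF equalizer_mono[OF e]] vh u unfolding E_def by blast
  qed (use u t eh q in \<open>simp add: hom_def E_def flip: comp_assoc\<close>)
qed

lemma pullback_exists_if_products_equalizers:
  assumes prods: "has_binary_products C" and eqs: "has_equalizers C"
    and f: "f \<in> hom C X Z" and g: "g \<in> hom C Y Z"
  shows "\<exists>p1 p2. is_pullback C p1 p2 f g"
proof -
  obtain P q1 q2 where P: "is_product C P q1 q2 X Y"
    using prods f g hom_objs unfolding has_binary_products_def by meson
  have "cComp C f q1 \<in> hom C P Z" "cComp C g q2 \<in> hom C P Z"
    using productD[OF P] f g comp_in_hom by blast+
  then have "\<exists>e. is_equalizer C e (cComp C f q1) (cComp C g q2)"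
    using eqs unfolding has_equalizers_def hom_def by auto
  then show ?thesis using pullback_of_product_equalizer[OF P f g] by blast
qed

end

section \<open>Abelian categories\<close>

locale abelian_cat =
  fixes C :: "('o, 'a) cat"
  assumes abelian: "abelian C"

sublocale abelian_cat \<subseteq> pointed_cat
proof unfold_locales
  show "pointed C" using abelian unfolding abelian_def by (elim conjE)
qed

context abelian_cat
begin

lemma kernel_exists: "f \<in> cArr C \<Longrightarrow> \<exists>k. is_kernel C k f"
  and cokernel_exists: "f \<in> cArr C \<Longrightarrow> \<exists>q. is_cokernel C q f"
  and mono_is_normal: "mono C m \<Longrightarrow> normal_mono C m"
  and epi_is_normal: "epi C e \<Longrightarrow> normal_epi C e"
  using abelian unfolding abelian_def by blast+

lemma iso_if_trivial_kernel_cokernel: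
  assumes "t \<in> cArr C" "trivial_kernel t" "trivial_cokernel t"
  shows "iso C t"
proof -
  have "has_binary_products C" "has_binary_coproducts C"
    using abelian unfolding abelian_def by blast+
  then have "mono C t" "epi C t"
    using mono_if_trivial_kernel epi_if_trivial_cokernel mono_is_normal epi_is_normal assms by blast+
  then show ?thesis using iso_if_normal_mono_epi mono_is_normal by blast
qed

text \<open>The direct sum decomposition of a split extension, obtained without any additive
  structure.\<close>

lemma iso_comp_complementary_kernels:
  assumes m: "is_kernel C m p" and s: "is_kernel C s q" and q: "epi C q"
    and sec: "s \<in> hom C (cCod C p) (cDom C p)" "cComp C p s = cId C (cCod C p)"
  shows "iso C (cComp C q m)"
proof (rule iso_if_trivial_kernel_cokernel)
  note km = kernelD[OF m] and ks = kernelD[OF s]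
  show "cComp C q m \<in> cArr C" using km ks sec by (simp add: hom_def)
  show "trivial_kernel (cComp C q m)"
    using trivial_kernel_comp_kernel[OF m s sec] .
  have "epi C p" using epi_if_section[OF km(2) sec] .
  then have "is_cokernel C p m" "is_cokernel C q s"
    using cokernel_if_normal_epi_kernel epi_is_normal q m s by blast+
  then show "trivial_cokernel (cComp C q m)"
    using trivial_cokernel_comp_cokernel sec by blast
qed

lemma kernel_of_split_epi_retraction:
  assumes m: "is_kernel C m p"
    and sec: "s \<in> hom C (cCod C p) (cDom C p)" "cComp C p s = cId C (cCod C p)"
  obtains r where "is_retraction C r m" "cComp C r s = zero (cCod C p) (cDom C m)"
proof -
  note km = kernelD[OF m]
  obtain q where q: "is_cokernel C q s"
    using cokernel_exists sec by (auto simp: hom_def)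
  note cq = cokernelD[OF q]
  have "mono C s" using mono_if_retraction[of s p] sec km by (simp add: hom_def)
  then have s: "is_kernel C s q"
    using kernel_if_normal_mono_cokernel mono_is_normal q by blast
  obtain t' where t': "t' \<in> hom C (cCod C q) (cDom C m)" "cComp C t' (cComp C q m) = cId C (cDom C m)"
    using iso_comp_complementary_kernels[OF m s cokernel_epi[OF q] sec] km cq sec
    by (elim isoE) (auto simp: hom_def)
  define r where "r = cComp C t' q"
  have "cComp C r s = cComp C t' (cComp C q s)"
    unfolding r_def using t' km cq(1-3) sec by (simp add: hom_def)
  also have "\<dots> = zero (cCod C p) (cDom C m)"
    using t' km cq sec by (simp add: hom_def)
  finally have "cComp C r s = zero (cCod C p) (cDom C m)" .
  moreover have "is_retraction C r m"
    unfolding is_retraction_def r_def using t' km cq sec by (simp add: hom_def)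
  ultimately show ?thesis using that by blast
qed

lemma split_mono_if_kernel_of_split_epi:
  assumes "is_kernel C m p" "split_epi C p"
  shows "split_mono C m"
  using assms kernel_of_split_epi_retraction[OF assms(1)] kernelD[OF assms(1)]
  unfolding split_epi_def split_mono_def by metis

lemma zero_obj_if_strong_complete:
  assumes sc: "strong_complete_obj C X"
  shows "zero_obj C X"
proof -
  have X: "X \<in> cObj C" and unique: "\<And>m. protosplit_mono C m \<Longrightarrow> cDom C m = X \<Longrightarrow>
      \<exists>!r. is_retraction C r m"
    using sc unfolding strong_complete_obj_def by blast+
  obtain P p1 p2 where P: "is_product C P p1 p2 X X"
    using abelian X unfolding abelian_def has_binary_products_def by blast
  have p: "p1 \<in> hom C P X" "p2 \<in> hom C P X" using productD[OF P] by auto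
  define k D where "k = tuple p1 p2 (zero X X) (cId C X)" and "D = tuple p1 p2 (cId C X) (cId C X)"
  have k: "k \<in> hom C X P" "cComp C p2 k = cId C X" "is_kernel C k p1"
    unfolding k_def using tuple[OF P, of "zero X X" X "cId C X"] zero_in_hom id_in_hom X
      kernel_of_product_projection[OF P] by auto
  have D: "D \<in> hom C X P" "cComp C p1 D = cId C X" "cComp C p2 D = cId C X"
    unfolding D_def using tuple[OF P] id_in_hom[OF X] by auto
  obtain r where r: "is_retraction C r k" "cComp C r D = zero X X"
    using kernel_of_split_epi_retraction[OF k(3), of D] D p k by (auto simp: hom_def)
  have "split_epi C p1" unfolding split_epi_def using D p by (auto simp: hom_def)
  then have "protosplit_mono C k" unfolding protosplit_mono_def using k(3) by blast
  then have "\<exists>!r. is_retraction C r k"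
    using unique k(1) by (simp add: hom_def)
  moreover have "is_retraction C p2 k"
    unfolding is_retraction_def using k p by (auto simp: hom_def)
  ultimately have "r = p2" using r(1) by blast
  then have "cId C X = zero X X" using D(3) r(2) by simp
  then show ?thesis using zero_objI_id_eq_zero X by blast
qed

text \<open>For injectivity, a morphism f along a mono m is pushed into the product \<open>B \<times> X\<close>;
  completeness splits the induced normal mono \<open>X \<rightarrow> (B \<times> X)/\<langle>m, f\<rangle>\<close>.\<close>

lemma retraction_annihilating_graph:
  assumes complete: "complete_obj C X" and P: "is_product C P pB pX B X"
    and m: "mono C m" "m \<in> hom C A B" and f: "f \<in> hom C A X"
  obtains \<rho> where "\<rho> \<in> hom C P X" "cComp C \<rho> (tuple pB pX (zero X B) (cId C X)) = cId C X"
    "cComp C \<rho> (tuple pB pX m f) = zero A X"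
proof -
  have p: "pB \<in> hom C P B" "pX \<in> hom C P X" using productD[OF P] by auto
  have objs: "A \<in> cObj C" "B \<in> cObj C" "X \<in> cObj C" using m(2) f hom_objs by blast+
  define n i where "n = tuple pB pX m f" and "i = tuple pB pX (zero X B) (cId C X)"
  have n: "n \<in> hom C A P" "cComp C pB n = m"
    unfolding n_def using tuple[OF P m(2) f] by auto
  have i: "i \<in> hom C X P"
    unfolding i_def using tuple[OF P, of "zero X B" X "cId C X"] zero_in_hom id_in_hom objs by auto
  have "mono C n" using mono_if_comp_mono[of pB n A P B] n p m(1) by simp
  then obtain q where q: "is_kernel C n q" using mono_is_normal unfolding normal_mono_def by blast
  note kq = kernelD[OF q]
  have "trivial_kernel (cComp C q i)"
    using trivial_kernel_comp_injection[OF P m f q[unfolded n_def]] unfolding i_def .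
  moreover have "has_binary_coproducts C" using abelian unfolding abelian_def by blast
  ultimately have "mono C (cComp C q i)"
    using mono_if_trivial_kernel epi_is_normal i kq n by (auto simp: hom_def)
  then have "split_mono C (cComp C q i)"
    using complete mono_is_normal i kq n unfolding complete_obj_def by (simp add: hom_def)
  then obtain r where r: "r \<in> hom C (cCod C q) X" "cComp C r (cComp C q i) = cId C X"
    unfolding split_mono_def is_retraction_def using i kq n by (auto simp: hom_def)
  have "cComp C (cComp C r q) n = cComp C r (cComp C q n)"
    using r kq(1-3) n by (simp add: hom_def)
  also have "\<dots> = zero A X"
    using r kq n objs by (simp add: hom_def)
  finally have "cComp C (cComp C r q) n = zero A X" .
  moreover have "cComp C (cComp C r q) i = cId C X"
    using r i kq n by (simp add: hom_def)
  moreover have "cComp C r q \<in> hom C P X" using r kq n by (simp add: hom_def)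
  ultimately show ?thesis using that unfolding n_def i_def by blast
qed

lemma iso_projection_comp_kernel:
  assumes P: "is_product C P pB pX B X"
    and \<rho>: "\<rho> \<in> hom C P X" "cComp C \<rho> (tuple pB pX (zero X B) (cId C X)) = cId C X"
    and k: "is_kernel C k \<rho>"
  shows "iso C (cComp C pB k)"
proof -
  have p: "pB \<in> hom C P B" "pX \<in> hom C P X" using productD[OF P] by auto
  have objs: "B \<in> cObj C" "X \<in> cObj C" using p hom_objs by blast+
  define i e where "i = tuple pB pX (zero X B) (cId C X)" and "e = tuple pB pX (cId C B) (zero B X)"
  have i: "i \<in> hom C X P" "is_kernel C i pB"
    unfolding i_def using tuple[OF P, of "zero X B" X "cId C X"] zero_in_hom id_in_hom objs
      kernel_of_product_projection[OF P] by auto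
  have "e \<in> hom C B P" "cComp C pB e = cId C B"
    unfolding e_def using tuple[OF P, of "cId C B" B "zero B X"] zero_in_hom id_in_hom objs by auto
  then have "epi C pB" using epi_if_section[of pB e] p by (simp add: hom_def)
  moreover have "i \<in> hom C (cCod C \<rho>) (cDom C \<rho>)" "cComp C \<rho> i = cId C (cCod C \<rho>)"
    using i(1) \<rho> p unfolding i_def by (auto simp: hom_def)
  ultimately show ?thesis using iso_comp_complementary_kernels[OF k i(2)] by blast
qed

lemma extension_from_retraction:
  assumes P: "is_product C P pB pX B X" and m: "m \<in> hom C A B" and f: "f \<in> hom C A X"
    and \<rho>: "\<rho> \<in> hom C P X" "cComp C \<rho> (tuple pB pX (zero X B) (cId C X)) = cId C X"
      "cComp C \<rho> (tuple pB pX m f) = zero A X"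
  shows "\<exists>g \<in> hom C B X. cComp C g m = f"
proof -
  have p: "pB \<in> hom C P B" "pX \<in> hom C P X" using productD[OF P] by auto
  define n where "n = tuple pB pX m f"
  have n: "n \<in> hom C A P" "cComp C pB n = m" "cComp C pX n = f"
    unfolding n_def using tuple[OF P m f] by auto
  obtain k where k: "is_kernel C k \<rho>" using kernel_exists \<rho>(1) by (auto simp: hom_def)
  define K where "K = cDom C k"
  have kh: "k \<in> hom C K P" using kernelD[OF k] \<rho>(1) unfolding K_def by (simp add: hom_def)
  obtain v where v: "v \<in> hom C B K" "cComp C v (cComp C pB k) = cId C K"
    using iso_projection_comp_kernel[OF P \<rho>(1,2) k] kh p by (elim isoE) (auto simp: hom_def)
  obtain a where a: "a \<in> hom C A K" "cComp C k a = n"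
    using kernel_factor[OF k, of n A] n \<rho> unfolding K_def n_def by (auto simp: hom_def)
  have "cComp C v m = cComp C v (cComp C pB (cComp C k a))"
    using n(2) a(2) by simp
  also have "\<dots> = cComp C (cComp C v (cComp C pB k)) a"
    using a(1) v(1) kh p by (simp add: hom_def)
  also have "\<dots> = a"
    using v a(1) kh p by (simp add: hom_def)
  finally have vm: "cComp C v m = a" .
  have "cComp C (cComp C (cComp C pX k) v) m = cComp C (cComp C pX k) (cComp C v m)"
    using v(1) kh p m by (simp add: hom_def)
  also have "\<dots> = cComp C pX (cComp C k a)"
    using vm a(1) kh p by (simp add: hom_def)
  also have "\<dots> = f"
    using a(2) n(3) by simp
  finally show ?thesis using v kh p comp_in_hom by blast
qed

lemma injective_if_complete:
  assumes "complete_obj C X"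
  shows "injective_obj C X"
  unfolding injective_obj_def injective_wrt_def
proof (intro conjI allI impI)
  show X: "X \<in> cObj C" using assms unfolding complete_obj_def by blast
  fix m f
  assume mf: "mono C m \<and> f \<in> hom C (cDom C m) X"
  then have mh: "m \<in> hom C (cDom C m) (cCod C m)" using mono_in_arr by (simp add: hom_def)
  obtain P pB pX where P: "is_product C P pB pX (cCod C m) X"
    using abelian X mh hom_objs unfolding abelian_def has_binary_products_def by meson
  obtain \<rho> where "\<rho> \<in> hom C P X" "cComp C \<rho> (tuple pB pX (zero X (cCod C m)) (cId C X)) = cId C X"
    "cComp C \<rho> (tuple pB pX m f) = zero (cDom C m) X"
    using retraction_annihilating_graph[OF assms P _ mh] mf by blast
  then show "\<exists>g \<in> hom C (cCod C m) X. cComp C g m = f"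
    using extension_from_retraction[OF P mh] mf by blast
qed

end

section \<open>Semi-abelian categories\<close>

locale semi_abelian_cat =
  fixes C :: "('o, 'a) cat"
  assumes semi_abelian: "semi_abelian C"

sublocale semi_abelian_cat \<subseteq> pointed_cat
proof unfold_locales
  show "pointed C" using semi_abelian unfolding semi_abelian_def by (elim conjE)
qed

context semi_abelian_cat
begin

lemma regular_cat: "regular_cat C"
  using semi_abelian unfolding semi_abelian_def barr_exact_def by blast

lemma products_exist: "has_binary_products C"
  and equalizers_exist: "has_equalizers C"
  using regular_cat unfolding regular_cat_def has_finite_limits_def by blast+

lemma regular_epi_pullback_stable: "regular_epi C e \<Longrightarrow> is_pullback C p1 p2 g e \<Longrightarrow> regular_epi C p1"
  using regular_cat unfolding regular_cat_def by blast

lemma iso_by_split_short_five: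
  assumes "p \<in> cArr C" "s \<in> hom C (cCod C p) (cDom C p)" "cComp C p s = cId C (cCod C p)"
    "is_kernel C k p"
    "p' \<in> cArr C" "s' \<in> hom C (cCod C p') (cDom C p')" "cComp C p' s' = cId C (cCod C p')"
    "is_kernel C k' p'"
    "u \<in> hom C (cDom C k) (cDom C k')" "v \<in> hom C (cDom C p) (cDom C p')"
    "w \<in> hom C (cCod C p) (cCod C p')"
    "cComp C k' u = cComp C v k" "cComp C p' v = cComp C w p" "cComp C v s = cComp C s' w"
    "iso C u" "iso C w"
  shows "iso C v"
proof -
  have "split_short_five C" using semi_abelian unfolding semi_abelian_def by blast
  note ssf = this[unfolded split_short_five_def, rule_format]
  show ?thesis using assms by (intro ssf[of p s k p' s' k' u v w] conjI)
qed

lemma equalizer_exists: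
  assumes "f \<in> hom C X Y" "g \<in> hom C X Y"
  shows "\<exists>e. is_equalizer C e f g"
proof -
  have "f \<in> cArr C" "g \<in> cArr C" "cDom C f = cDom C g" "cCod C f = cCod C g"
    using assms by (auto simp: hom_def)
  then show ?thesis using equalizers_exist unfolding has_equalizers_def by blast
qed

lemma kernel_exists:
  assumes "f \<in> cArr C"
  shows "\<exists>k. is_kernel C k f"
proof -
  have objs: "cDom C f \<in> cObj C" "cCod C f \<in> cObj C" using assms by auto
  have "f \<in> hom C (cDom C f) (cCod C f)" using assms by (simp add: hom_def)
  then obtain e where e: "is_equalizer C e f (zero (cDom C f) (cCod C f))"
    using equalizer_exists zero_in_hom[OF objs] by blast
  note ed = equalizerD[OF e]
  have "is_kernel C e f"
  proof (rule kernelI)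
    fix g T
    assume g: "g \<in> hom C T (cDom C f)" "cComp C f g = zero T (cCod C f)"
    then have "cComp C f g = cComp C (zero (cDom C f) (cCod C f)) g"
      using objs by (simp add: hom_def)
    then show "\<exists>u \<in> hom C T (cDom C e). cComp C e u = g"
      using equalizer_factor[OF e g(1)] by blast
  qed (use ed objs equalizer_mono[OF e] in simp_all)
  then show ?thesis by blast
qed

lemma pullback_exists: "f \<in> hom C X Z \<Longrightarrow> g \<in> hom C Y Z \<Longrightarrow> \<exists>p1 p2. is_pullback C p1 p2 f g"
  using pullback_exists_if_products_equalizers products_exist equalizers_exist by blast

lemma iso_if_mono_through_kernel_and_section:
  assumes sec: "s \<in> hom C A B" "p \<in> hom C B A" "cComp C s p = cId C B"
    and k: "is_kernel C k s" and m: "mono C m" "m \<in> hom C M A"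
    and k': "k' \<in> hom C (cDom C k) M" "cComp C m k' = k"
    and p': "p' \<in> hom C B M" "cComp C m p' = p"
  shows "iso C m"
proof -
  note kk = kernelD[OF k]
  have objs: "cDom C k \<in> cObj C" "B \<in> cObj C" using kk sec hom_objs by auto
  have "cComp C (cComp C s m) p' = cComp C s p"
    using p' m(2) sec by (simp add: hom_def flip: p'(2))
  then have "cComp C (cComp C s m) p' = cId C (cCod C (cComp C s m))"
    using sec m(2) by (simp add: hom_def)
  then show ?thesis
    by (intro iso_by_split_short_five[of "cComp C s m" p' k' s p k "cId C (cDom C k)" m "cId C B"]
        kernel_of_comp_mono[OF k m(1)] id_iso objs)
      (use sec k m p' k' kk objs id_in_hom in \<open>auto simp: hom_def\<close>)
qed

lemma eq_if_eq_on_kernel_and_section: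
  assumes sec: "s \<in> hom C A B" "p \<in> hom C B A" "cComp C s p = cId C B"
    and k: "is_kernel C k s" and g: "g1 \<in> hom C A Y" "g2 \<in> hom C A Y"
    and on_k: "cComp C g1 k = cComp C g2 k" and on_p: "cComp C g1 p = cComp C g2 p"
  shows "g1 = g2"
proof -
  note kk = kernelD[OF k]
  obtain e where e: "is_equalizer C e g1 g2" using equalizer_exists[OF g] by blast
  note ed = equalizerD[OF e]
  have eh: "e \<in> hom C (cDom C e) A" using ed g by (simp add: hom_def)
  obtain k' where "k' \<in> hom C (cDom C k) (cDom C e)" "cComp C e k' = k"
    using equalizer_factor[OF e, of k "cDom C k"] on_k kk sec g by (auto simp: hom_def)
  moreover obtain p' where "p' \<in> hom C B (cDom C e)" "cComp C e p' = p"
    using equalizer_factor[OF e, of p B] on_p sec g by (auto simp: hom_def)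
  ultimately have "iso C e"
    using iso_if_mono_through_kernel_and_section[OF sec k equalizer_mono[OF e] eh] by blast
  then show ?thesis
    using epiD[OF iso_epi, of e g1 Y g2] g ed eh by (auto simp: hom_def)
qed

lemma trivial_kernel_imp_mono:
  assumes f: "f \<in> hom C X Y" "trivial_kernel f"
  shows "mono C f"
proof -
  obtain r1 r2 where pb: "is_pullback C r1 r2 f f" using pullback_exists[OF f(1) f(1)] by blast
  note pd = pullbackD[OF pb]
  define R where "R = cDom C r1"
  have r: "r1 \<in> hom C R X" "r2 \<in> hom C R X" using pd f unfolding R_def by (auto simp: hom_def)
  have X: "X \<in> cObj C" using f hom_objs by blast
  obtain d where d: "d \<in> hom C X R" "cComp C r1 d = cId C X" "cComp C r2 d = cId C X"
    using pullback_factor[OF pb, of "cId C X" X "cId C X"] id_in_hom[OF X] f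
    unfolding R_def by (auto simp: hom_def)
  obtain k where k: "is_kernel C k r1" using kernel_exists r by (auto simp: hom_def)
  note kk = kernelD[OF k]
  define K where "K = cDom C k"
  have kh: "k \<in> hom C K R" and K: "K \<in> cObj C"
    using kk r unfolding K_def by (auto simp: hom_def)
  have r1k: "cComp C r1 k = zero K X" using kk r unfolding K_def by (simp add: hom_def)
  have "cComp C f (cComp C r2 k) = cComp C (cComp C f r1) k"
    using pd kh r f by (simp add: hom_def)
  also have "\<dots> = zero K Y"
    using comp_zero_left_nested[of f r1 k] r1k kh r f K by (simp add: hom_def)
  finally have "cComp C r2 k = zero K X"
    using trivial_kernelD[OF f(2), of "cComp C r2 k" K] kh r f by (simp add: hom_def)
  then have "r1 = r2"
    using eq_if_eq_on_kernel_and_section[OF r(1) d(1,2) k r] r1k d by simp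
  show ?thesis
  proof (rule monoI)
    fix x y T
    assume x: "x \<in> hom C T (cDom C f)" and y: "y \<in> hom C T (cDom C f)"
      and "cComp C f x = cComp C f y"
    then show "x = y" using pullback_factor[OF pb x y] \<open>r1 = r2\<close> by blast
  qed (use f in \<open>simp add: hom_def\<close>)
qed

lemma cokernel_of_kernel_of_split_epi:
  assumes sec: "s \<in> hom C A B" "p \<in> hom C B A" "cComp C s p = cId C B"
    and k: "is_kernel C k s"
  shows "is_cokernel C s k"
proof (rule cokernelI)
  note kk = kernelD[OF k]
  show "epi C s" using epi_if_section[of s p] sec by (simp add: hom_def)
  fix g T
  assume g: "g \<in> hom C (cCod C k) T" "cComp C g k = zero (cDom C k) T"
  have gh: "g \<in> hom C A T" and T: "T \<in> cObj C" using g kk sec hom_objs by (auto simp: hom_def)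
  have "cComp C (cComp C (cComp C g p) s) k = cComp C (cComp C g p) (cComp C s k)"
    using gh sec kk(1-3) by (simp add: hom_def)
  also have "\<dots> = cComp C g k" using g gh sec kk T by (simp add: hom_def)
  finally have "cComp C (cComp C g p) s = g"
    using eq_if_eq_on_kernel_and_section[OF sec k, of "cComp C (cComp C g p) s" T g] gh sec
      comp_id_left_nested[of "cComp C g p" s p]
    by (simp add: hom_def)
  moreover have "cComp C g p \<in> hom C (cCod C s) T" using gh sec by (simp add: hom_def)
  ultimately show "\<exists>u \<in> hom C (cCod C s) T. cComp C u s = g" by blast
qed (use kernelD[OF k] sec in \<open>simp_all add: hom_def\<close>)

lemma coequalizes_kernel_pair_if_annihilates_kernel:
  assumes pb: "is_pullback C r1 r2 e e" and k: "is_kernel C k e"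
    and g: "g \<in> hom C (cDom C e) T" "cComp C g k = zero (cDom C k) T"
  shows "cComp C g r1 = cComp C g r2"
proof -
  note pd = pullbackD[OF pb] and kk = kernelD[OF k]
  define A R where "A = cDom C e" and "R = cDom C r1"
  have r: "r1 \<in> hom C R A" "r2 \<in> hom C R A" and eh: "e \<in> hom C A (cCod C e)"
    using pd unfolding A_def R_def by (auto simp: hom_def)
  have A: "A \<in> cObj C" using eh hom_objs by blast
  obtain d where d: "d \<in> hom C A R" "cComp C r1 d = cId C A" "cComp C r2 d = cId C A"
    using pullback_factor[OF pb, of "cId C A" A "cId C A"] id_in_hom[OF A]
    unfolding A_def R_def by (auto simp: hom_def)
  obtain j where j: "is_kernel C j r1" using kernel_exists r by (auto simp: hom_def)
  note kj = kernelD[OF j]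
  define J where "J = cDom C j"
  have jh: "j \<in> hom C J R" and J: "J \<in> cObj C" using kj r unfolding J_def by (auto simp: hom_def)
  have r1j: "cComp C r1 j = zero J A" using kj r unfolding J_def by (simp add: hom_def)
  have "cComp C e (cComp C r2 j) = cComp C (cComp C e r1) j" using pd jh r by (simp add: hom_def)
  also have "\<dots> = zero J (cCod C e)"
    using comp_zero_left_nested[of e r1 j] r1j jh r eh J by (simp add: hom_def)
  finally obtain a where a: "a \<in> hom C J (cDom C k)" "cComp C k a = cComp C r2 j"
    using kernel_factor[OF k, of "cComp C r2 j" J] jh r unfolding A_def by (auto simp: hom_def)
  have T: "T \<in> cObj C" using g hom_objs by blast
  have "cComp C (cComp C g k) a = cComp C g (cComp C k a)"
    using a(1) g(1) kk by (simp add: hom_def)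
  also have "\<dots> = cComp C (cComp C g r2) j"
    using a(2) g(1) jh r unfolding A_def by (simp add: hom_def)
  finally have "cComp C (cComp C g r2) j = cComp C (cComp C g r1) j"
    using comp_zero_left_nested[of g r1 j] a(1) g r1j jh r kk T unfolding A_def
    by (simp add: hom_def)
  then show ?thesis
    using eq_if_eq_on_kernel_and_section[OF r(1) d(1,2) j, of "cComp C g r1" T "cComp C g r2"]
      comp_id_left_nested[of g r1 d] comp_id_left_nested[of g r2 d] g r d
    unfolding A_def by (simp add: hom_def)
qed

lemma normal_epi_if_regular_epi:
  assumes "regular_epi C e"
  shows "normal_epi C e"
proof -
  obtain x y where co: "is_coequalizer C e x y" using assms unfolding regular_epi_def by blast
  note cd = coequalizerD[OF co]
  obtain k where k: "is_kernel C k e" using kernel_exists cd by blast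
  note kk = kernelD[OF k]
  have "e \<in> hom C (cDom C e) (cCod C e)" using cd by (simp add: hom_def)
  then obtain r1 r2 where pb: "is_pullback C r1 r2 e e" using pullback_exists by blast
  have "is_cokernel C e k"
  proof (rule cokernelI)
    fix g T
    assume g: "g \<in> hom C (cCod C k) T" "cComp C g k = zero (cDom C k) T"
    have gh: "g \<in> hom C (cDom C e) T" using g kk by (simp add: hom_def)
    have "x \<in> hom C (cDom C x) (cDom C e)" "y \<in> hom C (cDom C x) (cDom C e)"
      using cd co unfolding is_coequalizer_def is_equalizer_def by (auto simp: hom_def)
    then obtain w where w: "cComp C r1 w = x" "cComp C r2 w = y" "w \<in> hom C (cDom C x) (cDom C r1)"
      using pullback_factor[OF pb] cd by blast
    have "cComp C g x = cComp C (cComp C g r1) w" using w gh pullbackD[OF pb] by (auto simp: hom_def)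
    also have "\<dots> = cComp C (cComp C g r2) w"
      using coequalizes_kernel_pair_if_annihilates_kernel[OF pb k gh g(2)] by simp
    also have "\<dots> = cComp C g y" using w gh pullbackD[OF pb] by (auto simp: hom_def)
    finally show "\<exists>u \<in> hom C (cCod C e) T. cComp C u e = g"
      using coequalizer_factor[OF co, of g T] gh cd by (auto simp: hom_def)
  qed (use kk coequalizer_epi[OF co] in simp_all)
  then show ?thesis unfolding normal_epi_def by blast
qed

lemma factor_through_mono_if_on_kernel_and_section:
  assumes sec: "s \<in> hom C A B" "p \<in> hom C B A" "cComp C s p = cId C B"
    and k: "is_kernel C k s" and \<kappa>: "\<kappa> \<in> hom C A K" and t: "mono C t" "t \<in> hom C N K"
    and a: "a \<in> hom C (cDom C k) N" "cComp C \<kappa> k = cComp C t a"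
    and b: "b \<in> hom C B N" "cComp C \<kappa> p = cComp C t b"
  obtains \<tau> where "\<tau> \<in> hom C A N" "cComp C t \<tau> = \<kappa>"
proof -
  note kk = kernelD[OF k]
  obtain m m2 where pb: "is_pullback C m m2 \<kappa> t" using pullback_exists[OF \<kappa> t(2)] by blast
  note pd = pullbackD[OF pb]
  define E where "E = cDom C m"
  have mh: "m \<in> hom C E A" "m2 \<in> hom C E N" using pd \<kappa> t unfolding E_def by (auto simp: hom_def)
  have kh: "k \<in> hom C (cDom C k) A" using kk sec by (simp add: hom_def)
  obtain k' where "k' \<in> hom C (cDom C k) E" "cComp C m k' = k"
    using pullback_factor[OF pb, of k "cDom C k" a] kh a \<kappa> t unfolding E_def by (auto simp: hom_def)
  moreover obtain p' where "p' \<in> hom C B E" "cComp C m p' = p"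
    using pullback_factor[OF pb, of p B b] sec b \<kappa> t unfolding E_def by (auto simp: hom_def)
  ultimately have "iso C m"
    using iso_if_mono_through_kernel_and_section[OF sec k pullback_of_mono[OF pb t(1)] mh(1)]
    by blast
  then obtain m' where m': "m' \<in> hom C A E" "cComp C m m' = cId C A"
    using mh by (elim isoE) (auto simp: hom_def)
  have "cComp C t (cComp C m2 m') = cComp C (cComp C \<kappa> m) m'"
    using pd mh m'(1) t \<kappa> by (simp add: hom_def)
  also have "\<dots> = \<kappa>"
    using comp_id_left_nested[of \<kappa> m m'] m' mh \<kappa> by (simp add: hom_def)
  finally show ?thesis using that mh m' comp_in_hom by blast
qed

text \<open>The kernel k of the retraction s maps isomorphically onto the cokernel of p, so k
  composed with the inverse splits the cokernel.\<close>

lemma split_epi_if_cokernel_of_split_normal_mono: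
  assumes \<kappa>: "is_cokernel C \<kappa> p" and "split_mono C p" "normal_mono C p"
  shows "split_epi C \<kappa>"
proof -
  obtain s where sec: "s \<in> hom C (cCod C p) (cDom C p)" "cComp C s p = cId C (cDom C p)"
    using assms(2) unfolding split_mono_def is_retraction_def by blast
  note c\<kappa> = cokernelD[OF \<kappa>]
  define A B K where "A = cCod C p" and "B = cDom C p" and "K = cCod C \<kappa>"
  have \<kappa>h: "\<kappa> \<in> hom C A K" and ph: "p \<in> hom C B A" and sh: "s \<in> hom C A B"
    using c\<kappa> sec unfolding A_def B_def K_def by (auto simp: hom_def)
  have objs: "A \<in> cObj C" "B \<in> cObj C" "K \<in> cObj C" using \<kappa>h ph hom_objs by blast+
  have p\<kappa>: "is_kernel C p \<kappa>" using kernel_if_normal_mono_cokernel[OF assms(3) \<kappa>] .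
  obtain k where k: "is_kernel C k s" using kernel_exists sh by (auto simp: hom_def)
  note kk = kernelD[OF k]
  define N where "N = cDom C k"
  have kh: "k \<in> hom C N A" and N: "N \<in> cObj C" using kk sh unfolding N_def by (auto simp: hom_def)
  define t where "t = cComp C \<kappa> k"
  have th: "t \<in> hom C N K" unfolding t_def using \<kappa>h kh comp_in_hom by blast
  have "trivial_kernel t"
    unfolding t_def using trivial_kernel_comp_kernel[OF k p\<kappa>] ph sec sh by (simp add: hom_def)
  then have t: "mono C t" using trivial_kernel_imp_mono th by blast
  obtain \<tau> where "\<tau> \<in> hom C A N" "cComp C t \<tau> = \<kappa>"
    by (rule factor_through_mono_if_on_kernel_and_section[OF sh ph _ k \<kappa>h t th,
          of "cId C N" "zero B N"])
      (use sec kh N objs zero_in_hom id_in_hom c\<kappa> ph \<kappa>h th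
        in \<open>auto simp: hom_def t_def N_def B_def\<close>)
  then have "split_epi C t"
    using split_epi_if_cokernel_factors_through_mono[OF \<kappa> t, of N \<tau>] th c\<kappa>(3)
    unfolding A_def K_def by simp
  then obtain h where h: "h \<in> hom C K N" "cComp C t h = cId C K"
    unfolding split_epi_def using th by (auto simp: hom_def)
  then have "cComp C \<kappa> (cComp C k h) = cId C (cCod C \<kappa>)"
    using \<kappa>h kh h unfolding t_def K_def by (simp add: hom_def)
  moreover have "cComp C k h \<in> hom C (cCod C \<kappa>) (cDom C \<kappa>)"
    using \<kappa>h kh h unfolding K_def by (auto simp: hom_def)
  ultimately show ?thesis
    unfolding split_epi_def using c\<kappa>(1) by blast
qed

lemma lift_along_regular_epi:
  assumes split: "\<And>j. normal_epi C j \<Longrightarrow> cCod C j = X \<Longrightarrow> split_epi C j"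
    and e: "regular_epi C e" and f: "f \<in> hom C X (cCod C e)"
  shows "\<exists>g \<in> hom C X (cDom C e). cComp C e g = f"
proof -
  obtain x y where "is_coequalizer C e x y" using e unfolding regular_epi_def by blast
  then have eh: "e \<in> hom C (cDom C e) (cCod C e)" using coequalizerD by (simp add: hom_def)
  obtain j i where pb: "is_pullback C j i f e" using pullback_exists[OF f eh] by blast
  note pd = pullbackD[OF pb]
  have "normal_epi C j" using normal_epi_if_regular_epi regular_epi_pullback_stable[OF e pb] by blast
  moreover have "cCod C j = X" using pd f by (simp add: hom_def)
  ultimately obtain r where r: "r \<in> hom C X (cDom C j)" "cComp C j r = cId C X"
    using split unfolding split_epi_def by blast
  have "cComp C e (cComp C i r) = cComp C f (cComp C j r)"
    using r(1) pd by (simp add: hom_def)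
  also have "\<dots> = f" using r f by (simp add: hom_def)
  finally have "cComp C e (cComp C i r) = f" .
  moreover have "cComp C i r \<in> hom C X (cDom C e)" using r pd by (auto simp: hom_def)
  ultimately show ?thesis by blast
qed

lemma zero_obj_if_unique_sections:
  assumes X: "X \<in> cObj C"
    and unique: "\<And>e. (\<exists>m. split_mono C m \<and> is_cokernel C e m) \<Longrightarrow> cCod C e = X \<Longrightarrow>
      \<exists>!s. s \<in> hom C X (cDom C e) \<and> cComp C e s = cId C X"
  shows "zero_obj C X"
proof -
  obtain P p1 p2 where P: "is_product C P p1 p2 X X"
    using products_exist X unfolding has_binary_products_def by blast
  have p: "p1 \<in> hom C P X" "p2 \<in> hom C P X" using productD[OF P] by auto
  define i1 i2 D where "i1 = tuple p1 p2 (cId C X) (zero X X)"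
    and "i2 = tuple p1 p2 (zero X X) (cId C X)" and "D = tuple p1 p2 (cId C X) (cId C X)"
  have i1: "i1 \<in> hom C X P" "cComp C p1 i1 = cId C X" "cComp C p2 i1 = zero X X"
    unfolding i1_def using tuple[OF P, of "cId C X" X "zero X X"] zero_in_hom id_in_hom X by auto
  have i2: "i2 \<in> hom C X P" "cComp C p2 i2 = cId C X" "is_kernel C i2 p1"
    unfolding i2_def using tuple[OF P, of "zero X X" X "cId C X"] zero_in_hom id_in_hom X
      kernel_of_product_projection[OF P] by auto
  have D: "D \<in> hom C X P" "cComp C p1 D = cId C X" "cComp C p2 D = cId C X"
    unfolding D_def using tuple[OF P] id_in_hom[OF X] by auto
  have "split_mono C i2"
    unfolding split_mono_def is_retraction_def using i2 p by (auto simp: hom_def)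
  moreover have "is_cokernel C p1 i2"
    using cokernel_of_kernel_of_split_epi[OF p(1) i1(1,2) i2(3)] .
  ultimately have "\<exists>!s. s \<in> hom C X P \<and> cComp C p1 s = cId C X"
    using unique[of p1] p by (auto simp: hom_def)
  then have "i1 = D" using i1 D by blast
  then have "cId C X = zero X X" using i1(3) D(3) by simp
  then show ?thesis using zero_objI_id_eq_zero X by blast
qed

end

section \<open>Categories with semi-abelian opposite\<close>

locale cosemi_abelian_cat =
  fixes C :: "('o, 'a) cat"
  assumes semi_abelian_op: "semi_abelian (op_cat C)"

sublocale cosemi_abelian_cat \<subseteq> op: semi_abelian_cat "op_cat C"
  by unfold_locales (rule semi_abelian_op)

sublocale cosemi_abelian_cat \<subseteq> pointed_cat
  using op.pointed by unfold_locales simp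

context cosemi_abelian_cat
begin

lemma split_mono_if_kernel_of_split_normal_epi:
  "is_kernel C \<kappa> p \<Longrightarrow> split_epi C p \<Longrightarrow> normal_epi C p \<Longrightarrow> split_mono C \<kappa>"
  using op.split_epi_if_cokernel_of_split_normal_mono[of \<kappa> p] by simp

lemma regular_injective_if_complete:
  assumes "complete_obj C X"
  shows "regular_injective_obj C X"
proof -
  have X: "X \<in> cObj C" and split: "\<And>j. normal_mono C j \<Longrightarrow> cDom C j = X \<Longrightarrow> split_mono C j"
    using assms unfolding complete_obj_def by blast+
  have "\<exists>g \<in> hom C (cCod C m) X. cComp C g m = f"
    if "regular_mono C m" "f \<in> hom C (cDom C m) X" for m f
    using op.lift_along_regular_epi[of X m f] split that by simp
  then show ?thesis
    unfolding regular_injective_obj_def injective_wrt_def using X by blast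
qed

lemma zero_obj_if_strong_complete:
  assumes "strong_complete_obj C X"
  shows "zero_obj C X"
proof -
  have X: "X \<in> cObj C" and unique: "\<And>m. protosplit_mono C m \<Longrightarrow> cDom C m = X \<Longrightarrow>
      \<exists>!r. is_retraction C r m"
    using assms unfolding strong_complete_obj_def by blast+
  have "\<exists>!r. r \<in> hom C (cCod C e) X \<and> cComp C r e = cId C X"
    if "\<exists>p. split_epi C p \<and> is_kernel C e p" "cDom C e = X" for e
    using unique[of e] that kernelD(1) unfolding protosplit_mono_def is_retraction_def by auto
  then show ?thesis
    using op.zero_obj_if_unique_sections[of X] X by simp
qed

end

theorem proposition4p8:
  fixes C :: "('o, 'a) cat"
  shows
   "(abelian C \<longrightarrow>
       (\<forall>\<kappa>. (\<exists>p. is_kernel C \<kappa> p \<and> split_epi C p \<and> normal_epi C p) \<longrightarrow> split_mono C \<kappa>) \<and>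
       (\<forall>X \<in> cObj C. proto_complete_obj C X) \<and>
       (\<forall>X \<in> cObj C. complete_obj C X \<longleftrightarrow> injective_obj C X) \<and>
       (\<forall>X \<in> cObj C. complete_obj C X \<longleftrightarrow> regular_injective_obj C X) \<and>
       (\<forall>X \<in> cObj C. strong_complete_obj C X \<longleftrightarrow> zero_obj C X))
    \<and>
    (semi_abelian (op_cat C) \<longrightarrow>
       (\<forall>\<kappa>. (\<exists>p. is_kernel C \<kappa> p \<and> split_epi C p \<and> normal_epi C p) \<longrightarrow> split_mono C \<kappa>) \<and>
       (\<forall>X \<in> cObj C. complete_obj C X \<longleftrightarrow> regular_injective_obj C X) \<and>
       (\<forall>X \<in> cObj C. strong_complete_obj C X \<longleftrightarrow> zero_obj C X))"
proof (intro conjI impI)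
  assume "abelian C"
  then interpret abelian_cat C by unfold_locales
  show "\<forall>\<kappa>. (\<exists>p. is_kernel C \<kappa> p \<and> split_epi C p \<and> normal_epi C p) \<longrightarrow> split_mono C \<kappa>"
    using split_mono_if_kernel_of_split_epi by blast
  show "\<forall>X \<in> cObj C. proto_complete_obj C X"
    unfolding proto_complete_obj_def protosplit_mono_def
    using split_mono_if_kernel_of_split_epi by blast
  show "\<forall>X \<in> cObj C. complete_obj C X \<longleftrightarrow> injective_obj C X"
    "\<forall>X \<in> cObj C. complete_obj C X \<longleftrightarrow> regular_injective_obj C X"
    using injective_if_complete regular_injective_if_injective complete_if_regular_injective
    by blast+
  show "\<forall>X \<in> cObj C. strong_complete_obj C X \<longleftrightarrow> zero_obj C X"
    using zero_obj_if_strong_complete strong_complete_if_zero_obj by blast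
next
  assume "semi_abelian (op_cat C)"
  then interpret cosemi_abelian_cat C by unfold_locales
  show "\<forall>\<kappa>. (\<exists>p. is_kernel C \<kappa> p \<and> split_epi C p \<and> normal_epi C p) \<longrightarrow> split_mono C \<kappa>"
    using split_mono_if_kernel_of_split_normal_epi by blast
  show "\<forall>X \<in> cObj C. complete_obj C X \<longleftrightarrow> regular_injective_obj C X"
    using regular_injective_if_complete complete_if_regular_injective by blast
  show "\<forall>X \<in> cObj C. strong_complete_obj C X \<longleftrightarrow> zero_obj C X"
    using zero_obj_if_strong_complete strong_complete_if_zero_obj by blast
qed

end
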